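(* Let $\mathcal{V}$ be a locally small symmetric monoidal closed category that is finitely well-complete. Then $\underline{\mathcal{V}}$ is $\mathcal{V}$-finitely-well-complete, and $(\mathrm{Epi}_{\mathcal{V}}\underline{\mathcal{V}},\mathrm{StrMono}_{\mathcal{V}}\underline{\mathcal{V}})=(\mathrm{Epi}\,\mathcal{V},\mathrm{StrMono}\,\mathcal{V})$ is a $\mathcal{V}$-proper $\mathcal{V}$-factorization-system on $\underline{\mathcal{V}}$.
   Context: $\underline{\mathcal{V}}$ is the self-enrichment of $\mathcal{V}$. For a $\mathcal{V}$-category $\mathbf{A}$: $\mathcal{V}$-monos are $m$ with all $\mathbf{A}(A,m)$ mono in $\mathcal{V}$; $\mathcal{V}$-epis are $\mathcal{V}$-monos in $\mathbf{A}^{\mathrm{op}}$; $e\downarrow_{\mathcal{V}}m$ ($e:A_1\to A_2$, $m:B_1\to B_2$) means the square with sides $\mathbf{A}(A_2,m)$, $\mathbf{A}(e,B_1)$, $\mathbf{A}(e,B_2)$, $\mathbf{A}(A_1,m)$ is a pullback in $\mathcal{V}$; $\mathcal{E}^{\downarrow_{\mathcal{V}}}$, $\mathcal{M}^{\uparrow_{\mathcal{V}}}$ are the corresponding right/left orthogonal classes; $\mathrm{StrMono}_{\mathcal{V}}\mathbf{A}=(\mathrm{Epi}_{\mathcal{V}}\mathbf{A})^{\downarrow_{\mathcal{V}}}\cap\mathrm{Mono}_{\mathcal{V}}\mathbf{A}$. A $\mathcal{V}$-factorization-system is $(\mathcal{E},\mathcal{M})$ with $\mathcal{E}^{\downarrow_{\mathcal{V}}}=\mathcal{M}$,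 $\mathcal{M}^{\uparrow_{\mathcal{V}}}=\mathcal{E}$ and $(\mathcal{E},\mathcal{M})$-factorizations; it is $\mathcal{V}$-proper if $\mathcal{E}\subseteq\mathrm{Epi}_{\mathcal{V}}$ and $\mathcal{M}\subseteq\mathrm{Mono}_{\mathcal{V}}$. A $\mathcal{V}$-limit is an ordinary limit preserved by all $\mathbf{A}(A,-)$. $\mathbf{A}$ is $\mathcal{V}$-finitely-well-complete if it has all finite $\mathcal{V}$-limits and every (class-indexed) family of $\mathcal{V}$-strong-monos with common codomain has a $\mathcal{V}$-fiber-product that is again a $\mathcal{V}$-strong-mono. An ordinary category is finitely well-complete if it has finite limits and every (class-indexed) family of strong monomorphisms with common codomain has a fiber product (the case $\mathcal{V}=\mathbf{Set}$). *)

theory Defs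
  imports Main
begin

record ('o,'m) cat =
  obj   :: "'o set"
  arr   :: "'m set"
  cdom  :: "'m \<Rightarrow> 'o"
  ccod  :: "'m \<Rightarrow> 'o"
  cid   :: "'o \<Rightarrow> 'm"
  ccomp :: "'m \<Rightarrow> 'm \<Rightarrow> 'm"   (* ccomp C g f  =  g o f *)

definition hom :: "('o,'m,'z) cat_scheme \<Rightarrow> 'o \<Rightarrow> 'o \<Rightarrow> 'm set" where
  "hom C A B = {f \<in> arr C. cdom C f = A \<and> ccod C f = B}"

definition category :: "('o,'m,'z) cat_scheme \<Rightarrow> bool" where
  "category C \<longleftrightarrow>
     (\<forall>f\<in>arr C. cdom C f \<in> obj C \<and> ccod C f \<in> obj C) \<and>
     (\<forall>A\<in>obj C. cid C A \<in> hom C A A) \<and>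
     (\<forall>f\<in>arr C. \<forall>g\<in>arr C. ccod C f = cdom C g \<longrightarrow>
         ccomp C g f \<in> hom C (cdom C f) (ccod C g)) \<and>
     (\<forall>f\<in>arr C. ccomp C f (cid C (cdom C f)) = f \<and> ccomp C (cid C (ccod C f)) f = f) \<and>
     (\<forall>f\<in>arr C. \<forall>g\<in>arr C. \<forall>h\<in>arr C. ccod C f = cdom C g \<and> ccod C g = cdom C h \<longrightarrow>
         ccomp C h (ccomp C g f) = ccomp C (ccomp C h g) f)"

definition iso :: "('o,'m,'z) cat_scheme \<Rightarrow> 'm \<Rightarrow> bool" where
  "iso C f \<longleftrightarrow> f \<in> arr C \<and> (\<exists>g\<in>hom C (ccod C f) (cdom C f).
      ccomp C g f = cid C (cdom C f) \<and> ccomp C f g = cid C (ccod C f))"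

definition mono :: "('o,'m,'z) cat_scheme \<Rightarrow> 'm \<Rightarrow> bool" where
  "mono C m \<longleftrightarrow> m \<in> arr C \<and>
     (\<forall>g\<in>arr C. \<forall>h\<in>arr C. ccod C g = cdom C m \<and> ccod C h = cdom C m \<and> cdom C g = cdom C h \<and>
        ccomp C m g = ccomp C m h \<longrightarrow> g = h)"

definition epi :: "('o,'m,'z) cat_scheme \<Rightarrow> 'm \<Rightarrow> bool" where
  "epi C e \<longleftrightarrow> e \<in> arr C \<and>
     (\<forall>g\<in>arr C. \<forall>h\<in>arr C. cdom C g = ccod C e \<and> cdom C h = ccod C e \<and> ccod C g = ccod C h \<and>
        ccomp C g e = ccomp C h e \<longrightarrow> g = h)"

definition orth :: "('o,'m,'z) cat_scheme \<Rightarrow> 'm \<Rightarrow> 'm \<Rightarrow> bool" where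
  "orth C e m \<longleftrightarrow> e \<in> arr C \<and> m \<in> arr C \<and>
     (\<forall>u\<in>hom C (cdom C e) (cdom C m). \<forall>v\<in>hom C (ccod C e) (ccod C m).
        ccomp C m u = ccomp C v e \<longrightarrow>
        (\<exists>!d. d \<in> hom C (ccod C e) (cdom C m) \<and> ccomp C d e = u \<and> ccomp C m d = v))"

definition Epis :: "('o,'m,'z) cat_scheme \<Rightarrow> 'm set" where
  "Epis C = {e. epi C e}"

definition Monos :: "('o,'m,'z) cat_scheme \<Rightarrow> 'm set" where
  "Monos C = {m. mono C m}"

definition StrMonos :: "('o,'m,'z) cat_scheme \<Rightarrow> 'm set" where
  "StrMonos C = {m. mono C m \<and> (\<forall>e. epi C e \<longrightarrow> orth C e m)}"

definition is_pullback :: "('o,'m,'z) cat_scheme \<Rightarrow> 'm \<Rightarrow> 'm \<Rightarrow> 'm \<Rightarrow> 'm \<Rightarrow> bool" where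
  "is_pullback C p1 p2 f g \<longleftrightarrow>
     f \<in> arr C \<and> g \<in> arr C \<and> ccod C f = ccod C g \<and>
     p1 \<in> hom C (cdom C p1) (cdom C f) \<and> p2 \<in> hom C (cdom C p1) (cdom C g) \<and>
     ccomp C f p1 = ccomp C g p2 \<and>
     (\<forall>X\<in>obj C. \<forall>x1\<in>hom C X (cdom C f). \<forall>x2\<in>hom C X (cdom C g).
        ccomp C f x1 = ccomp C g x2 \<longrightarrow>
        (\<exists>!u. u \<in> hom C X (cdom C p1) \<and> ccomp C p1 u = x1 \<and> ccomp C p2 u = x2))"

definition wide_pullback ::
  "('o,'m,'z) cat_scheme \<Rightarrow> 'i set \<Rightarrow> ('i \<Rightarrow> 'm) \<Rightarrow> 'o \<Rightarrow> 'o \<Rightarrow> 'm \<Rightarrow> ('i \<Rightarrow> 'm) \<Rightarrow> bool" where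
  "wide_pullback C I f B P q p \<longleftrightarrow>
     B \<in> obj C \<and> P \<in> obj C \<and> q \<in> hom C P B \<and>
     (\<forall>i\<in>I. f i \<in> hom C (cdom C (f i)) B \<and> p i \<in> hom C P (cdom C (f i)) \<and> ccomp C (f i) (p i) = q) \<and>
     (\<forall>X\<in>obj C. \<forall>y\<in>hom C X B. \<forall>x.
        (\<forall>i\<in>I. x i \<in> hom C X (cdom C (f i)) \<and> ccomp C (f i) (x i) = y) \<longrightarrow>
        (\<exists>!u. u \<in> hom C X P \<and> ccomp C q u = y \<and> (\<forall>i\<in>I. ccomp C (p i) u = x i)))"

definition is_functor ::
  "('a,'b,'y) cat_scheme \<Rightarrow> ('o,'m,'z) cat_scheme \<Rightarrow> ('a \<Rightarrow> 'o) \<Rightarrow> ('b \<Rightarrow> 'm) \<Rightarrow> bool" where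
  "is_functor J C Fo Fa \<longleftrightarrow>
     (\<forall>j\<in>obj J. Fo j \<in> obj C) \<and>
     (\<forall>u\<in>arr J. Fa u \<in> hom C (Fo (cdom J u)) (Fo (ccod J u))) \<and>
     (\<forall>j\<in>obj J. Fa (cid J j) = cid C (Fo j)) \<and>
     (\<forall>u\<in>arr J. \<forall>v\<in>arr J. ccod J u = cdom J v \<longrightarrow> Fa (ccomp J v u) = ccomp C (Fa v) (Fa u))"

definition is_cone ::
  "('a,'b,'y) cat_scheme \<Rightarrow> ('o,'m,'z) cat_scheme \<Rightarrow> ('a \<Rightarrow> 'o) \<Rightarrow> ('b \<Rightarrow> 'm) \<Rightarrow> 'o \<Rightarrow> ('a \<Rightarrow> 'm) \<Rightarrow> bool" where
  "is_cone J C Do Da L l \<longleftrightarrow> L \<in> obj C \<and>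
     (\<forall>j\<in>obj J. l j \<in> hom C L (Do j)) \<and>
     (\<forall>u\<in>arr J. ccomp C (Da u) (l (cdom J u)) = l (ccod J u))"

definition is_limit ::
  "('a,'b,'y) cat_scheme \<Rightarrow> ('o,'m,'z) cat_scheme \<Rightarrow> ('a \<Rightarrow> 'o) \<Rightarrow> ('b \<Rightarrow> 'm) \<Rightarrow> 'o \<Rightarrow> ('a \<Rightarrow> 'm) \<Rightarrow> bool" where
  "is_limit J C Do Da L l \<longleftrightarrow> is_cone J C Do Da L l \<and>
     (\<forall>X x. is_cone J C Do Da X x \<longrightarrow>
        (\<exists>!u. u \<in> hom C X L \<and> (\<forall>j\<in>obj J. ccomp C (l j) u = x j)))"

text \<open>Finite shapes: finite categories (represented, up to isomorphism, on \<open>nat\<close>).\<close>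
definition finite_shape :: "(nat,nat) cat \<Rightarrow> bool" where
  "finite_shape J \<longleftrightarrow> category J \<and> finite (obj J) \<and> finite (arr J)"

definition has_finite_limits :: "('o,'m,'z) cat_scheme \<Rightarrow> bool" where
  "has_finite_limits C \<longleftrightarrow>
     (\<forall>J Do Da. finite_shape J \<and> is_functor J C Do Da \<longrightarrow> (\<exists>L l. is_limit J C Do Da L l))"

definition finitely_well_complete :: "('o,'m,'z) cat_scheme \<Rightarrow> bool" where
  "finitely_well_complete C \<longleftrightarrow> has_finite_limits C \<and>
     (\<forall>S B. B \<in> obj C \<and> S \<subseteq> StrMonos C \<and> (\<forall>s\<in>S. ccod C s = B) \<longrightarrow>
        (\<exists>P q p. wide_pullback C S (\<lambda>s. s) B P q p \<and> q \<in> StrMonos C))"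

record ('o,'m) smcc = "('o,'m) cat" +
  tens   :: "'o \<Rightarrow> 'o \<Rightarrow> 'o"
  tensm  :: "'m \<Rightarrow> 'm \<Rightarrow> 'm"
  tunit  :: "'o"
  alpha  :: "'o \<Rightarrow> 'o \<Rightarrow> 'o \<Rightarrow> 'm"   (* (A\<otimes>B)\<otimes>C \<rightarrow> A\<otimes>(B\<otimes>C) *)
  lam    :: "'o \<Rightarrow> 'm"                (* I\<otimes>A \<rightarrow> A *)
  rho    :: "'o \<Rightarrow> 'm"                (* A\<otimes>I \<rightarrow> A *)
  sigma  :: "'o \<Rightarrow> 'o \<Rightarrow> 'm"          (* A\<otimes>B \<rightarrow> B\<otimes>A *)
  ihom   :: "'o \<Rightarrow> 'o \<Rightarrow> 'o"
  ev     :: "'o \<Rightarrow> 'o \<Rightarrow> 'm"          (* [A,B]\<otimes>A \<rightarrow> B *)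

definition symmetric_monoidal_closed :: "('o,'m,'z) smcc_scheme \<Rightarrow> bool" where
  "symmetric_monoidal_closed V \<longleftrightarrow> category V \<and>
     \<comment> \<open>tensor is a bifunctor\<close>
     (\<forall>A\<in>obj V. \<forall>B\<in>obj V. tens V A B \<in> obj V) \<and>
     (\<forall>f\<in>arr V. \<forall>g\<in>arr V. tensm V f g \<in>
        hom V (tens V (cdom V f) (cdom V g)) (tens V (ccod V f) (ccod V g))) \<and>
     (\<forall>A\<in>obj V. \<forall>B\<in>obj V. tensm V (cid V A) (cid V B) = cid V (tens V A B)) \<and>
     (\<forall>f\<in>arr V. \<forall>g\<in>arr V. \<forall>f'\<in>arr V. \<forall>g'\<in>arr V.
        ccod V f = cdom V g \<and> ccod V f' = cdom V g' \<longrightarrow>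
        tensm V (ccomp V g f) (ccomp V g' f') = ccomp V (tensm V g g') (tensm V f f')) \<and>
     tunit V \<in> obj V \<and>
     \<comment> \<open>associator, unitors, symmetry: natural isomorphisms\<close>
     (\<forall>A\<in>obj V. \<forall>B\<in>obj V. \<forall>C\<in>obj V.
        alpha V A B C \<in> hom V (tens V (tens V A B) C) (tens V A (tens V B C)) \<and> iso V (alpha V A B C)) \<and>
     (\<forall>f\<in>arr V. \<forall>g\<in>arr V. \<forall>h\<in>arr V.
        ccomp V (alpha V (ccod V f) (ccod V g) (ccod V h)) (tensm V (tensm V f g) h) =
        ccomp V (tensm V f (tensm V g h)) (alpha V (cdom V f) (cdom V g) (cdom V h))) \<and>
     (\<forall>A\<in>obj V. lam V A \<in> hom V (tens V (tunit V) A) A \<and> iso V (lam V A)) \<and>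
     (\<forall>f\<in>arr V. ccomp V (lam V (ccod V f)) (tensm V (cid V (tunit V)) f) = ccomp V f (lam V (cdom V f))) \<and>
     (\<forall>A\<in>obj V. rho V A \<in> hom V (tens V A (tunit V)) A \<and> iso V (rho V A)) \<and>
     (\<forall>f\<in>arr V. ccomp V (rho V (ccod V f)) (tensm V f (cid V (tunit V))) = ccomp V f (rho V (cdom V f))) \<and>
     (\<forall>A\<in>obj V. \<forall>B\<in>obj V. sigma V A B \<in> hom V (tens V A B) (tens V B A) \<and>
        ccomp V (sigma V B A) (sigma V A B) = cid V (tens V A B)) \<and>
     (\<forall>f\<in>arr V. \<forall>g\<in>arr V.
        ccomp V (sigma V (ccod V f) (ccod V g)) (tensm V f g) =
        ccomp V (tensm V g f) (sigma V (cdom V f) (cdom V g))) \<and>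
     \<comment> \<open>pentagon\<close>
     (\<forall>A\<in>obj V. \<forall>B\<in>obj V. \<forall>C\<in>obj V. \<forall>D\<in>obj V.
        ccomp V (alpha V A B (tens V C D)) (alpha V (tens V A B) C D) =
        ccomp V (tensm V (cid V A) (alpha V B C D))
          (ccomp V (alpha V A (tens V B C) D) (tensm V (alpha V A B C) (cid V D)))) \<and>
     \<comment> \<open>triangle\<close>
     (\<forall>A\<in>obj V. \<forall>B\<in>obj V.
        ccomp V (tensm V (cid V A) (lam V B)) (alpha V A (tunit V) B) = tensm V (rho V A) (cid V B)) \<and>
     \<comment> \<open>hexagon\<close>
     (\<forall>A\<in>obj V. \<forall>B\<in>obj V. \<forall>C\<in>obj V.
        ccomp V (alpha V B C A) (ccomp V (sigma V A (tens V B C)) (alpha V A B C)) =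
        ccomp V (tensm V (cid V B) (sigma V A C))
          (ccomp V (alpha V B A C) (tensm V (sigma V A B) (cid V C)))) \<and>
     \<comment> \<open>closedness: \<open>- \<otimes> A\<close> has right adjoint \<open>[A,-]\<close> with counit \<open>ev\<close>\<close>
     (\<forall>A\<in>obj V. \<forall>B\<in>obj V. ihom V A B \<in> obj V \<and>
        ev V A B \<in> hom V (tens V (ihom V A B) A) B \<and>
        (\<forall>X\<in>obj V. \<forall>f\<in>hom V (tens V X A) B.
           \<exists>!g. g \<in> hom V X (ihom V A B) \<and> ccomp V (ev V A B) (tensm V g (cid V A)) = f))"

text \<open>These are the
  hom-actions \<open>\<underline>V(A,m)\<close> and \<open>\<underline>V(e,B)\<close> of the self-enrichment \<open>\<underline>V\<close>.\<close>
definition ihom_r :: "('o,'m,'z) smcc_scheme \<Rightarrow> 'o \<Rightarrow> 'm \<Rightarrow> 'm" where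
  "ihom_r V A m = (THE g. g \<in> hom V (ihom V A (cdom V m)) (ihom V A (ccod V m)) \<and>
      ccomp V (ev V A (ccod V m)) (tensm V g (cid V A)) = ccomp V m (ev V A (cdom V m)))"

definition ihom_l :: "('o,'m,'z) smcc_scheme \<Rightarrow> 'm \<Rightarrow> 'o \<Rightarrow> 'm" where
  "ihom_l V e B = (THE g. g \<in> hom V (ihom V (ccod V e) B) (ihom V (cdom V e) B) \<and>
      ccomp V (ev V (cdom V e) B) (tensm V g (cid V (cdom V e))) =
      ccomp V (ev V (ccod V e) B) (tensm V (cid V (ihom V (ccod V e) B)) e))"

definition VMonos :: "('o,'m,'z) smcc_scheme \<Rightarrow> 'm set" where
  "VMonos V = {m \<in> arr V. \<forall>A\<in>obj V. mono V (ihom_r V A m)}"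

definition VEpis :: "('o,'m,'z) smcc_scheme \<Rightarrow> 'm set" where
  "VEpis V = {e \<in> arr V. \<forall>B\<in>obj V. mono V (ihom_l V e B)}"

definition Vorth :: "('o,'m,'z) smcc_scheme \<Rightarrow> 'm \<Rightarrow> 'm \<Rightarrow> bool" where
  "Vorth V e m \<longleftrightarrow> e \<in> arr V \<and> m \<in> arr V \<and>
     is_pullback V (ihom_r V (ccod V e) m) (ihom_l V e (cdom V m))
                   (ihom_l V e (ccod V m)) (ihom_r V (cdom V e) m)"

definition Vright :: "('o,'m,'z) smcc_scheme \<Rightarrow> 'm set \<Rightarrow> 'm set" where
  "Vright V E = {m \<in> arr V. \<forall>e\<in>E. Vorth V e m}"

definition Vleft :: "('o,'m,'z) smcc_scheme \<Rightarrow> 'm set \<Rightarrow> 'm set" where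
  "Vleft V M = {e \<in> arr V. \<forall>m\<in>M. Vorth V e m}"

definition VStrMonos :: "('o,'m,'z) smcc_scheme \<Rightarrow> 'm set" where
  "VStrMonos V = Vright V (VEpis V) \<inter> VMonos V"

definition V_factorization_system :: "('o,'m,'z) smcc_scheme \<Rightarrow> 'm set \<Rightarrow> 'm set \<Rightarrow> bool" where
  "V_factorization_system V E M \<longleftrightarrow> Vright V E = M \<and> Vleft V M = E \<and>
     (\<forall>f\<in>arr V. \<exists>e\<in>E. \<exists>m\<in>M. ccod V e = cdom V m \<and> f = ccomp V m e)"

definition V_proper :: "('o,'m,'z) smcc_scheme \<Rightarrow> 'm set \<Rightarrow> 'm set \<Rightarrow> bool" where
  "V_proper V E M \<longleftrightarrow> E \<subseteq> VEpis V \<and> M \<subseteq> VMonos V"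

definition is_Vlimit ::
  "('a,'b,'y) cat_scheme \<Rightarrow> ('o,'m,'z) smcc_scheme \<Rightarrow> ('a \<Rightarrow> 'o) \<Rightarrow> ('b \<Rightarrow> 'm) \<Rightarrow> 'o \<Rightarrow> ('a \<Rightarrow> 'm) \<Rightarrow> bool" where
  "is_Vlimit J V Do Da L l \<longleftrightarrow> is_limit J V Do Da L l \<and>
     (\<forall>A\<in>obj V. is_limit J V (\<lambda>j. ihom V A (Do j)) (\<lambda>u. ihom_r V A (Da u))
                             (ihom V A L) (\<lambda>j. ihom_r V A (l j)))"

definition has_finite_Vlimits :: "('o,'m,'z) smcc_scheme \<Rightarrow> bool" where
  "has_finite_Vlimits V \<longleftrightarrow>
     (\<forall>J Do Da. finite_shape J \<and> is_functor J V Do Da \<longrightarrow> (\<exists>L l. is_Vlimit J V Do Da L l))"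

definition is_Vwide_pullback ::
  "('o,'m,'z) smcc_scheme \<Rightarrow> 'i set \<Rightarrow> ('i \<Rightarrow> 'm) \<Rightarrow> 'o \<Rightarrow> 'o \<Rightarrow> 'm \<Rightarrow> ('i \<Rightarrow> 'm) \<Rightarrow> bool" where
  "is_Vwide_pullback V I f B P q p \<longleftrightarrow> wide_pullback V I f B P q p \<and>
     (\<forall>A\<in>obj V. wide_pullback V I (\<lambda>i. ihom_r V A (f i)) (ihom V A B) (ihom V A P)
                  (ihom_r V A q) (\<lambda>i. ihom_r V A (p i)))"

definition Vfinitely_well_complete :: "('o,'m,'z) smcc_scheme \<Rightarrow> bool" where
  "Vfinitely_well_complete V \<longleftrightarrow> has_finite_Vlimits V \<and>
     (\<forall>S B. B \<in> obj V \<and> S \<subseteq> VStrMonos V \<and> (\<forall>s\<in>S. ccod V s = B) \<longrightarrow>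
        (\<exists>P q p. is_Vwide_pullback V S (\<lambda>s. s) B P q p \<and> q \<in> VStrMonos V))"

end

theory Submission
  imports Defs
begin

text \<open>
  Closedness makes \<open>- \<otimes> A\<close> left adjoint to \<open>[A,-]\<close>. Hence \<open>[A,-]\<close> preserves all limits of
  \<open>V\<close>, so finite limits and fiber products are \<open>V\<close>-limits, and \<open>X \<otimes> -\<close> (isomorphic to
  \<open>- \<otimes> X\<close> by the symmetry) preserves epis. Transposing along the adjunction, the pullback
  square defining \<open>e \<down>\<^sub>V m\<close> expresses unique lifting of \<open>X \<otimes> e\<close> against \<open>m\<close> for all \<open>X\<close>;
  so every epi is \<open>V\<close>-orthogonal to every strong mono. Conversely, testing on global elements
  \<open>I \<rightarrow> [A,B]\<close>, which correspond to arrows \<open>A \<rightarrow> B\<close>, shows that \<open>V\<close>-orthogonality implies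
  ordinary orthogonality and that \<open>V\<close>-epis are epis.

  In a finitely well-complete category every arrow factors as an epi followed by a strong mono:
  the second factor is the intersection of all strong subobjects through which the arrow
  factors, and the first is epi because equalizers are strong monos. Using this factorization,
  the arrows orthogonal to all epis are exactly the strong monos, and the arrows orthogonal to all
  strong monos are exactly the epis.
\<close>

locale ord_cat =
  fixes C :: "('o,'m,'z) cat_scheme"
  assumes category: "category C"
begin

abbreviation comp_arr (infixr "\<cdot>" 55) where "g \<cdot> f \<equiv> ccomp C g f"

lemma hom_arr: "f \<in> hom C A B \<Longrightarrow> f \<in> arr C"
  by (simp add: hom_def)

lemma hom_dom: "f \<in> hom C A B \<Longrightarrow> cdom C f = A"
  by (simp add: hom_def)

lemma hom_cod: "f \<in> hom C A B \<Longrightarrow> ccod C f = B"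
  by (simp add: hom_def)

lemma arr_hom: "f \<in> arr C \<Longrightarrow> f \<in> hom C (cdom C f) (ccod C f)"
  by (simp add: hom_def)

lemma hom_obj_dom: "f \<in> hom C A B \<Longrightarrow> A \<in> obj C"
  using category unfolding category_def hom_def by blast

lemma hom_obj_cod: "f \<in> hom C A B \<Longrightarrow> B \<in> obj C"
  using category unfolding category_def hom_def by blast

lemma id_hom [intro]: "A \<in> obj C \<Longrightarrow> cid C A \<in> hom C A A"
  using category unfolding category_def by blast

lemma comp_hom: "f \<in> hom C A B \<Longrightarrow> g \<in> hom C B D \<Longrightarrow> g \<cdot> f \<in> hom C A D"
  using category unfolding category_def hom_def by auto

lemma comp_id_right [simp]: "f \<in> hom C A B \<Longrightarrow> f \<cdot> cid C A = f"
  using category unfolding category_def hom_def by auto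

lemma comp_id_left [simp]: "f \<in> hom C A B \<Longrightarrow> cid C B \<cdot> f = f"
  using category unfolding category_def hom_def by auto

lemma comp_assoc:
  "f \<in> hom C A B \<Longrightarrow> g \<in> hom C B D \<Longrightarrow> h \<in> hom C D E \<Longrightarrow> h \<cdot> (g \<cdot> f) = (h \<cdot> g) \<cdot> f"
  using category unfolding category_def hom_def by auto

lemma monoI_hom:
  assumes "m \<in> hom C B D"
    and "\<And>X g h. g \<in> hom C X B \<Longrightarrow> h \<in> hom C X B \<Longrightarrow> m \<cdot> g = m \<cdot> h \<Longrightarrow> g = h"
  shows "mono C m"
  using assms unfolding mono_def hom_def by auto

lemma mono_cancel:
  "mono C m \<Longrightarrow> m \<in> hom C B D \<Longrightarrow> g \<in> hom C X B \<Longrightarrow> h \<in> hom C X B \<Longrightarrow> m \<cdot> g = m \<cdot> h \<Longrightarrow> g = h"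
  unfolding mono_def hom_def by auto

lemma epiI_hom:
  assumes "e \<in> hom C A B"
    and "\<And>Y g h. g \<in> hom C B Y \<Longrightarrow> h \<in> hom C B Y \<Longrightarrow> g \<cdot> e = h \<cdot> e \<Longrightarrow> g = h"
  shows "epi C e"
  using assms unfolding epi_def hom_def by auto

lemma epi_cancel:
  "epi C e \<Longrightarrow> e \<in> hom C A B \<Longrightarrow> g \<in> hom C B Y \<Longrightarrow> h \<in> hom C B Y \<Longrightarrow> g \<cdot> e = h \<cdot> e \<Longrightarrow> g = h"
  unfolding epi_def hom_def by auto

lemma mono_arr: "mono C m \<Longrightarrow> m \<in> arr C"
  by (simp add: mono_def)

lemma epi_arr: "epi C e \<Longrightarrow> e \<in> arr C"
  by (simp add: epi_def)

lemma split_mono: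
  assumes k: "k \<in> hom C A B" and r: "r \<in> hom C B A" and rk: "r \<cdot> k = cid C A"
  shows "mono C k"
proof (rule monoI_hom[OF k])
  fix X g h assume g: "g \<in> hom C X A" and h: "h \<in> hom C X A" and eq: "k \<cdot> g = k \<cdot> h"
  have "g = (r \<cdot> k) \<cdot> g" using rk g by simp
  also have "\<dots> = (r \<cdot> k) \<cdot> h" using eq comp_assoc[OF g k r] comp_assoc[OF h k r] by simp
  also have "\<dots> = h" using rk h by simp
  finally show "g = h" .
qed

lemma split_epi:
  assumes k: "k \<in> hom C A B" and s: "s \<in> hom C B A" and ks: "k \<cdot> s = cid C B"
  shows "epi C k"
proof (rule epiI_hom[OF k])
  fix Y g h assume g: "g \<in> hom C B Y" and h: "h \<in> hom C B Y" and eq: "g \<cdot> k = h \<cdot> k"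
  have "g = g \<cdot> (k \<cdot> s)" using ks g by simp
  also have "\<dots> = h \<cdot> (k \<cdot> s)" using eq comp_assoc[OF s k g] comp_assoc[OF s k h] by simp
  also have "\<dots> = h" using ks h by simp
  finally show "g = h" .
qed

lemma iso_epi: "iso C f \<Longrightarrow> epi C f"
  unfolding iso_def by (metis split_epi arr_hom)

lemma mono_comp:
  assumes "mono C m1" "m1 \<in> hom C B1 B2" "mono C m2" "m2 \<in> hom C B2 B3"
  shows "mono C (m2 \<cdot> m1)"
proof (rule monoI_hom)
  show "m2 \<cdot> m1 \<in> hom C B1 B3" using comp_hom assms(2,4) .
  fix X g h assume g: "g \<in> hom C X B1" and h: "h \<in> hom C X B1"
    and eq: "(m2 \<cdot> m1) \<cdot> g = (m2 \<cdot> m1) \<cdot> h"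
  have "m2 \<cdot> (m1 \<cdot> g) = m2 \<cdot> (m1 \<cdot> h)"
    using eq comp_assoc[OF g assms(2,4)] comp_assoc[OF h assms(2,4)] by simp
  then have "m1 \<cdot> g = m1 \<cdot> h"
    by (rule mono_cancel[OF assms(3,4) comp_hom[OF g assms(2)] comp_hom[OF h assms(2)]])
  then show "g = h" using mono_cancel[OF assms(1,2) g h] by blast
qed

lemma epi_comp:
  assumes "epi C e1" "e1 \<in> hom C A1 A2" "epi C e2" "e2 \<in> hom C A2 A3"
  shows "epi C (e2 \<cdot> e1)"
proof (rule epiI_hom)
  show "e2 \<cdot> e1 \<in> hom C A1 A3" using comp_hom assms(2,4) .
  fix Y g h assume g: "g \<in> hom C A3 Y" and h: "h \<in> hom C A3 Y"
    and eq: "g \<cdot> (e2 \<cdot> e1) = h \<cdot> (e2 \<cdot> e1)"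
  have "(g \<cdot> e2) \<cdot> e1 = (h \<cdot> e2) \<cdot> e1"
    using eq comp_assoc[OF assms(2,4) g] comp_assoc[OF assms(2,4) h] by simp
  then have "g \<cdot> e2 = h \<cdot> e2"
    by (rule epi_cancel[OF assms(1,2) comp_hom[OF assms(4) g] comp_hom[OF assms(4) h]])
  then show "g = h" using epi_cancel[OF assms(3,4) g h] by blast
qed

lemma orthI:
  assumes e: "e \<in> hom C A1 A2" and m: "m \<in> hom C B1 B2" and "mono C m"
    and fill: "\<And>u v. u \<in> hom C A1 B1 \<Longrightarrow> v \<in> hom C A2 B2 \<Longrightarrow> m \<cdot> u = v \<cdot> e \<Longrightarrow>
                 \<exists>d\<in>hom C A2 B1. d \<cdot> e = u \<and> m \<cdot> d = v"
  shows "orth C e m"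
  unfolding orth_def hom_dom[OF e] hom_cod[OF e] hom_dom[OF m] hom_cod[OF m]
proof (intro conjI ballI impI)
  show "e \<in> arr C" "m \<in> arr C" using e m hom_arr by blast+
  fix u v assume "u \<in> hom C A1 B1" "v \<in> hom C A2 B2" "m \<cdot> u = v \<cdot> e"
  with fill obtain d where "d \<in> hom C A2 B1" "d \<cdot> e = u" "m \<cdot> d = v" by blast
  with \<open>mono C m\<close> m show "\<exists>!d. d \<in> hom C A2 B1 \<and> d \<cdot> e = u \<and> m \<cdot> d = v"
    using mono_cancel by blast
qed

lemma orthD:
  assumes "orth C e m" "e \<in> hom C A1 A2" "m \<in> hom C B1 B2"
    and "u \<in> hom C A1 B1" "v \<in> hom C A2 B2" "m \<cdot> u = v \<cdot> e"
  shows "\<exists>d\<in>hom C A2 B1. d \<cdot> e = u \<and> m \<cdot> d = v"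
proof -
  have "\<exists>!d. d \<in> hom C A2 B1 \<and> d \<cdot> e = u \<and> m \<cdot> d = v"
    using assms unfolding orth_def by (simp add: hom_dom hom_cod)
  then show ?thesis by blast
qed

lemma StrMonos_mono: "m \<in> StrMonos C \<Longrightarrow> mono C m"
  by (simp add: StrMonos_def)

lemma StrMonos_orth: "m \<in> StrMonos C \<Longrightarrow> epi C e \<Longrightarrow> orth C e m"
  by (simp add: StrMonos_def)

lemma StrMonos_comp:
  assumes m1: "m1 \<in> StrMonos C" "m1 \<in> hom C B1 B2" and m2: "m2 \<in> StrMonos C" "m2 \<in> hom C B2 B3"
  shows "m2 \<cdot> m1 \<in> StrMonos C"
proof -
  have mono: "mono C (m2 \<cdot> m1)" using mono_comp StrMonos_mono m1 m2 by blast
  have "orth C e (m2 \<cdot> m1)" if ep: "epi C e" for e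
  proof (rule orthI[OF arr_hom[OF epi_arr[OF ep]] _ mono])
    let ?A1 = "cdom C e" and ?A2 = "ccod C e"
    have e: "e \<in> hom C ?A1 ?A2" using arr_hom epi_arr ep by blast
    show "m2 \<cdot> m1 \<in> hom C B1 B3" using comp_hom m1(2) m2(2) .
    fix u v assume u: "u \<in> hom C ?A1 B1" and v: "v \<in> hom C ?A2 B3" and sq: "(m2 \<cdot> m1) \<cdot> u = v \<cdot> e"
    have "m2 \<cdot> (m1 \<cdot> u) = v \<cdot> e" using sq comp_assoc[OF u m1(2) m2(2)] by simp
    then obtain d2 where d2: "d2 \<in> hom C ?A2 B2" "d2 \<cdot> e = m1 \<cdot> u" "m2 \<cdot> d2 = v"
      using orthD[OF StrMonos_orth[OF m2(1) ep] e m2(2) comp_hom[OF u m1(2)] v] by blast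
    then obtain d1 where d1: "d1 \<in> hom C ?A2 B1" "d1 \<cdot> e = u" "m1 \<cdot> d1 = d2"
      using orthD[OF StrMonos_orth[OF m1(1) ep] e m1(2) u] by metis
    then have "(m2 \<cdot> m1) \<cdot> d1 = v" using comp_assoc[OF d1(1) m1(2) m2(2)] d2(3) by simp
    with d1 show "\<exists>d\<in>hom C ?A2 B1. d \<cdot> e = u \<and> (m2 \<cdot> m1) \<cdot> d = v" by blast
  qed
  with mono show ?thesis unfolding StrMonos_def by blast
qed

section \<open>Equalizers and the epi--strong-mono factorization\<close>

definition is_equalizer :: "'m \<Rightarrow> 'm \<Rightarrow> 'm \<Rightarrow> bool" where
  "is_equalizer g h k \<longleftrightarrow> k \<in> arr C \<and> g \<cdot> k = h \<cdot> k \<and>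
     (\<forall>X x. x \<in> hom C X (ccod C k) \<and> g \<cdot> x = h \<cdot> x \<longrightarrow>
        (\<exists>!u. u \<in> hom C X (cdom C k) \<and> k \<cdot> u = x))"

lemma equalizer_lift:
  assumes "is_equalizer g h k" "k \<in> hom C L P" "x \<in> hom C X P" "g \<cdot> x = h \<cdot> x"
  shows "\<exists>!u. u \<in> hom C X L \<and> k \<cdot> u = x"
  using assms(1,3,4) unfolding is_equalizer_def hom_dom[OF assms(2)] hom_cod[OF assms(2)] by blast

lemma equalizer_equalizes: "is_equalizer g h k \<Longrightarrow> g \<cdot> k = h \<cdot> k"
  unfolding is_equalizer_def by blast

lemma equalizer_mono:
  assumes eq: "is_equalizer g h k" and k: "k \<in> hom C L P" and g: "g \<in> hom C P Y"
    and h: "h \<in> hom C P Y"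
  shows "mono C k"
proof (rule monoI_hom[OF k])
  fix X a b assume a: "a \<in> hom C X L" and b: "b \<in> hom C X L" and ab: "k \<cdot> a = k \<cdot> b"
  have "g \<cdot> (k \<cdot> a) = h \<cdot> (k \<cdot> a)"
    using equalizer_equalizes[OF eq] comp_assoc[OF a k g] comp_assoc[OF a k h] by simp
  with equalizer_lift[OF eq k comp_hom[OF a k]] a b ab show "a = b" by (metis (no_types, lifting))
qed

lemma equalizer_StrMonos:
  assumes eq: "is_equalizer g h k" and k: "k \<in> hom C L P" and g: "g \<in> hom C P Y"
    and h: "h \<in> hom C P Y"
  shows "k \<in> StrMonos C"
proof -
  have mono: "mono C k" using equalizer_mono[OF assms] .
  have gk: "g \<cdot> k = h \<cdot> k" using equalizer_equalizes[OF eq] .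
  have "orth C e k" if ep: "epi C e" for e
  proof (rule orthI[OF arr_hom[OF epi_arr[OF ep]] k mono])
    let ?A1 = "cdom C e" and ?A2 = "ccod C e"
    have e: "e \<in> hom C ?A1 ?A2" using arr_hom epi_arr ep by blast
    fix u v assume u: "u \<in> hom C ?A1 L" and v: "v \<in> hom C ?A2 P" and sq: "k \<cdot> u = v \<cdot> e"
    have "(g \<cdot> v) \<cdot> e = (h \<cdot> v) \<cdot> e"
      using sq gk comp_assoc[OF e v g] comp_assoc[OF e v h] comp_assoc[OF u k g]
        comp_assoc[OF u k h]
      by simp
    then have "g \<cdot> v = h \<cdot> v" using epi_cancel[OF ep e] comp_hom[OF v g] comp_hom[OF v h] by blast
    then obtain d where d: "d \<in> hom C ?A2 L" "k \<cdot> d = v" using equalizer_lift[OF eq k v] by blast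
    have "k \<cdot> (d \<cdot> e) = k \<cdot> u" using comp_assoc[OF e d(1) k] d(2) sq by simp
    then have "d \<cdot> e = u" by (rule mono_cancel[OF mono k comp_hom[OF e d(1)] u])
    with d show "\<exists>d\<in>hom C ?A2 L. d \<cdot> e = u \<and> k \<cdot> d = v" by blast
  qed
  with mono show ?thesis unfolding StrMonos_def by blast
qed

end

text \<open>The shape of an equalizer diagram: objects \<open>0, 1\<close>, identity arrows \<open>0, 1\<close> and two
  parallel arrows \<open>2, 3 : 0 \<rightarrow> 1\<close>.\<close>

definition parallel_pair :: "(nat,nat) cat" where
  "parallel_pair = \<lparr>obj = {0,1}, arr = {0,1,2,3}, cdom = (\<lambda>a. if a = 1 then 1 else 0),
     ccod = (\<lambda>a. if a = 0 then 0 else 1), cid = (\<lambda>j. j), ccomp = (\<lambda>g f. if f \<le> 1 then g else f)\<rparr>"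

lemma parallel_pair_simps:
  "obj parallel_pair = {0,1}" "arr parallel_pair = {0,1,2,3}"
  "cdom parallel_pair a = (if a = 1 then 1 else 0)"
    "ccod parallel_pair a = (if a = 0 then 0 else 1)"
  "cid parallel_pair j = j" "ccomp parallel_pair g f = (if f \<le> 1 then g else f)"
  by (simp_all add: parallel_pair_def)

lemma finite_shape_parallel_pair: "finite_shape parallel_pair"
  unfolding finite_shape_def category_def hom_def parallel_pair_simps by auto

context ord_cat
begin

lemma parallel_pair_functor:
  assumes g: "g \<in> hom C P Y" and h: "h \<in> hom C P Y"
  shows "is_functor parallel_pair C (\<lambda>j. if j = 0 then P else Y)
           (\<lambda>a. if a = 0 then cid C P else if a = 1 then cid C Y else if a = 2 then g else h)"
proof -
  have PY: "P \<in> obj C" "Y \<in> obj C" using g hom_obj_dom hom_obj_cod by blast+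
  show ?thesis
    unfolding is_functor_def parallel_pair_simps
    using PY g h id_hom[of P] id_hom[of Y] by auto
qed

lemma equalizer_exists:
  assumes fl: "has_finite_limits C" and g: "g \<in> hom C P Y" and h: "h \<in> hom C P Y"
  shows "\<exists>L k. k \<in> hom C L P \<and> is_equalizer g h k"
proof -
  define Do where "Do = (\<lambda>j::nat. if j = 0 then P else Y)"
  define Da where
    "Da = (\<lambda>a::nat. if a = 0 then cid C P else if a = 1 then cid C Y else if a = 2 then g else h)"
  obtain L l where lim: "is_limit parallel_pair C Do Da L l"
    using fl parallel_pair_functor[OF g h] finite_shape_parallel_pair
    unfolding has_finite_limits_def Do_def Da_def by blast
  have X: "X \<in> obj C" if "x \<in> hom C X P" for X x using that hom_obj_dom by blast
  have cone: "l 0 \<in> hom C L P" "g \<cdot> l 0 = l 1" "h \<cdot> l 0 = l 1"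
    using lim g h unfolding is_limit_def is_cone_def parallel_pair_simps Do_def Da_def by auto
  have cone_of: "is_cone parallel_pair C Do Da X (\<lambda>j. if j = 0 then x else g \<cdot> x)"
    if x: "x \<in> hom C X P" "g \<cdot> x = h \<cdot> x" for X x
    unfolding is_cone_def parallel_pair_simps Do_def Da_def
    using x X[OF x(1)] g comp_hom[OF x(1) g] by auto
  have "is_equalizer g h (l 0)"
    unfolding is_equalizer_def hom_dom[OF cone(1)] hom_cod[OF cone(1)]
  proof (intro conjI allI impI)
    show "l 0 \<in> arr C" "g \<cdot> l 0 = h \<cdot> l 0" using cone hom_arr by auto
    fix X x assume x: "x \<in> hom C X P \<and> g \<cdot> x = h \<cdot> x"
    have "\<exists>!u. u \<in> hom C X L \<and> (\<forall>j\<in>obj parallel_pair. l j \<cdot> u = (if j = 0 then x else g \<cdot> x))"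
      using conjunct2[OF lim[unfolded is_limit_def], rule_format, OF cone_of] x by blast
    moreover have "(u \<in> hom C X L \<and> (\<forall>j\<in>obj parallel_pair. l j \<cdot> u = (if j = 0 then x else g \<cdot> x)))
        \<longleftrightarrow> (u \<in> hom C X L \<and> l 0 \<cdot> u = x)" for u
      using comp_assoc[OF _ cone(1) g, of u X] cone(2) by (auto simp: parallel_pair_simps)
    ultimately show "\<exists>!u. u \<in> hom C X L \<and> l 0 \<cdot> u = x" by simp
  qed
  with cone(1) show ?thesis by blast
qed

lemma wide_pullback_leg:
  assumes "wide_pullback C I f B P q p" "i \<in> I"
  shows "p i \<in> hom C P (cdom C (f i)) \<and> f i \<cdot> p i = q"
proof -
  have "\<forall>i\<in>I. f i \<in> hom C (cdom C (f i)) B \<and> p i \<in> hom C P (cdom C (f i)) \<and> f i \<cdot> p i = q"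
    using assms(1) unfolding wide_pullback_def by (elim conjE) assumption
  with assms(2) show ?thesis by blast
qed

lemma wide_pullback_apex: "wide_pullback C I f B P q p \<Longrightarrow> P \<in> obj C \<and> q \<in> hom C P B"
  unfolding wide_pullback_def by (elim conjE) (intro conjI)

lemma wide_pullback_lift:
  assumes "wide_pullback C I f B P q p" "y \<in> hom C X B"
    and "\<And>i. i \<in> I \<Longrightarrow> x i \<in> hom C X (cdom C (f i)) \<and> f i \<cdot> x i = y"
  shows "\<exists>!u. u \<in> hom C X P \<and> q \<cdot> u = y \<and> (\<forall>i\<in>I. p i \<cdot> u = x i)"
proof -
  have "\<forall>X\<in>obj C. \<forall>y\<in>hom C X B. \<forall>x. (\<forall>i\<in>I. x i \<in> hom C X (cdom C (f i)) \<and> f i \<cdot> x i = y) \<longrightarrow>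
          (\<exists>!u. u \<in> hom C X P \<and> q \<cdot> u = y \<and> (\<forall>i\<in>I. p i \<cdot> u = x i))"
    using assms(1) unfolding wide_pullback_def by (elim conjE) assumption
  from this[rule_format, OF hom_obj_dom[OF assms(2)] assms(2)] assms(3) show ?thesis by simp
qed

lemma finitely_well_complete_wide_pullback:
  assumes "finitely_well_complete C" "B \<in> obj C" "S \<subseteq> StrMonos C" "\<forall>s\<in>S. ccod C s = B"
  shows "\<exists>P q p. wide_pullback C S (\<lambda>s. s) B P q p \<and> q \<in> StrMonos C"
proof -
  have "\<forall>S B. B \<in> obj C \<and> S \<subseteq> StrMonos C \<and> (\<forall>s\<in>S. ccod C s = B) \<longrightarrow>
          (\<exists>P q p. wide_pullback C S (\<lambda>s. s) B P q p \<and> q \<in> StrMonos C)"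
    using assms(1) unfolding finitely_well_complete_def by (elim conjE) assumption
  with assms(2-4) show ?thesis by blast
qed

lemma epi_if_StrMono_factors_split:
  assumes fl: "has_finite_limits C" and e: "e \<in> hom C A P"
    and split: "\<And>L k e'. k \<in> StrMonos C \<Longrightarrow> k \<in> hom C L P \<Longrightarrow> e' \<in> hom C A L \<Longrightarrow> k \<cdot> e' = e \<Longrightarrow>
                  \<exists>s\<in>hom C P L. k \<cdot> s = cid C P"
  shows "epi C e"
proof (rule epiI_hom[OF e])
  fix Y g h assume g: "g \<in> hom C P Y" and h: "h \<in> hom C P Y" and ge: "g \<cdot> e = h \<cdot> e"
  obtain L k where k: "k \<in> hom C L P" "is_equalizer g h k"
    using equalizer_exists[OF fl g h] by blast
  obtain e' where e': "e' \<in> hom C A L" "k \<cdot> e' = e"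
    using equalizer_lift[OF k(2) k(1) e ge] by blast
  obtain s where s: "s \<in> hom C P L" "k \<cdot> s = cid C P"
    using split[OF equalizer_StrMonos[OF k(2) k(1) g h] k(1) e'] by blast
  show "g = h"
    by (rule epi_cancel[OF split_epi[OF k(1) s] k(1) g h equalizer_equalizes[OF k(2)]])
qed

lemma epi_StrMono_factorization:
  assumes fwc: "finitely_well_complete C" and f: "f \<in> hom C A B"
  shows "\<exists>P e m. e \<in> hom C A P \<and> epi C e \<and> m \<in> hom C P B \<and> m \<in> StrMonos C \<and> f = m \<cdot> e"
proof -
  \<comment> \<open>the strong subobjects of \<open>B\<close> through which \<open>f\<close> factors; their intersection is the image\<close>
  define S where "S = {s \<in> StrMonos C. ccod C s = B \<and> (\<exists>g\<in>hom C A (cdom C s). s \<cdot> g = f)}"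
  have "S \<subseteq> StrMonos C" "\<forall>s\<in>S. ccod C s = B" unfolding S_def by blast+
  then obtain P q p where W: "wide_pullback C S (\<lambda>s. s) B P q p" and q: "q \<in> StrMonos C"
    using finitely_well_complete_wide_pullback[OF fwc hom_obj_cod[OF f]] by blast
  have P: "P \<in> obj C" and qh: "q \<in> hom C P B" using wide_pullback_apex[OF W] by blast+
  define x where "x s = (SOME g. g \<in> hom C A (cdom C s) \<and> s \<cdot> g = f)" for s
  have "x s \<in> hom C A (cdom C s) \<and> s \<cdot> x s = f" if "s \<in> S" for s
  proof -
    have "\<exists>g. g \<in> hom C A (cdom C s) \<and> s \<cdot> g = f" using that unfolding S_def by blast
    then show ?thesis unfolding x_def by (rule someI_ex)
  qed
  then obtain e where e: "e \<in> hom C A P" "q \<cdot> e = f"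
    using wide_pullback_lift[OF W f, of x] by blast
  have "epi C e"
  proof (rule epi_if_StrMono_factors_split[OF _ e(1)])
    show "has_finite_limits C" using fwc unfolding finitely_well_complete_def by (elim conjE)
    fix L k e' assume k: "k \<in> StrMonos C" "k \<in> hom C L P" and e': "e' \<in> hom C A L" "k \<cdot> e' = e"
    have qk: "q \<cdot> k \<in> hom C L B" using comp_hom k(2) qh .
    have "(q \<cdot> k) \<cdot> e' = f" using comp_assoc[OF e'(1) k(2) qh] e'(2) e(2) by simp
    then have "q \<cdot> k \<in> S"
      unfolding S_def using StrMonos_comp[OF k q qh] qk e'(1) hom_dom[OF qk] hom_cod[OF qk] by blast
    then have p: "p (q \<cdot> k) \<in> hom C P L" "(q \<cdot> k) \<cdot> p (q \<cdot> k) = q"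
      using wide_pullback_leg[OF W \<open>q \<cdot> k \<in> S\<close>] unfolding hom_dom[OF qk] by simp_all
    have "q \<cdot> (k \<cdot> p (q \<cdot> k)) = q \<cdot> cid C P" using comp_assoc[OF p(1) k(2) qh] p(2) qh by simp
    then have "k \<cdot> p (q \<cdot> k) = cid C P"
      by (rule mono_cancel[OF StrMonos_mono[OF q] qh comp_hom[OF p(1) k(2)] id_hom[OF P]])
    with p(1) show "\<exists>s\<in>hom C P L. k \<cdot> s = cid C P" by blast
  qed
  with e qh q show ?thesis by blast
qed

lemma Epis_StrMonos_factorization:
  assumes "finitely_well_complete C" "f \<in> arr C"
  shows "\<exists>e\<in>Epis C. \<exists>m\<in>StrMonos C. ccod C e = cdom C m \<and> f = m \<cdot> e"
proof -
  obtain P e m where "e \<in> hom C (cdom C f) P" "epi C e" "m \<in> hom C P (ccod C f)" "m \<in> StrMonos C"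
    "f = m \<cdot> e"
    using epi_StrMono_factorization[OF assms(1) arr_hom[OF assms(2)]] by blast
  then show ?thesis unfolding Epis_def using hom_dom hom_cod by fastforce
qed

lemma orth_epis_imp_StrMonos:
  assumes fwc: "finitely_well_complete C" and m: "m \<in> hom C B1 B2"
    and orth: "\<And>e. epi C e \<Longrightarrow> orth C e m"
  shows "m \<in> StrMonos C"
proof -
  obtain M e0 m' where e0: "e0 \<in> hom C B1 M" "epi C e0"
    and m': "m' \<in> hom C M B2" "m' \<in> StrMonos C" "m = m' \<cdot> e0"
    using epi_StrMono_factorization[OF fwc m] by blast
  have B1: "B1 \<in> obj C" using hom_obj_dom[OF m] .
  obtain d where d: "d \<in> hom C M B1" "d \<cdot> e0 = cid C B1" "m \<cdot> d = m'"
    using orthD[OF orth[OF e0(2)] e0(1) m id_hom[OF B1] m'(1)] m'(3) m by auto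
  have "mono C m"
    using mono_comp[OF split_mono[OF e0(1) d(1,2)] e0(1) StrMonos_mono[OF m'(2)] m'(1)] m'(3)
      by simp
  with orth show ?thesis unfolding StrMonos_def by blast
qed

lemma orth_StrMonos_imp_epi:
  assumes fwc: "finitely_well_complete C" and e: "e \<in> hom C A1 A2"
    and orth: "\<And>m. m \<in> StrMonos C \<Longrightarrow> orth C e m"
  shows "epi C e"
proof -
  obtain M e' m where e': "e' \<in> hom C A1 M" "epi C e'"
    and m: "m \<in> hom C M A2" "m \<in> StrMonos C" "e = m \<cdot> e'"
    using epi_StrMono_factorization[OF fwc e] by blast
  have A2: "A2 \<in> obj C" using hom_obj_cod[OF e] .
  obtain d where d: "d \<in> hom C A2 M" "d \<cdot> e = e'" "m \<cdot> d = cid C A2"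
    using orthD[OF orth[OF m(2)] e m(1) e'(1) id_hom[OF A2]] m(3) e by auto
  show ?thesis
    using epi_comp[OF e'(2,1) split_epi[OF m(1) d(1,3)] m(1)] m(3) by simp
qed

end

section \<open>Currying in a symmetric monoidal closed category\<close>

locale smc = ord_cat V for V :: "('o,'m,'z) smcc_scheme" +
  assumes smc: "symmetric_monoidal_closed V"
begin

notation comp_arr (infixr "\<cdot>" 55) \<comment> \<open>not inherited: the record scheme is instantiated\<close>

lemma tens_obj [intro]: "A \<in> obj V \<Longrightarrow> B \<in> obj V \<Longrightarrow> tens V A B \<in> obj V"
  using smc unfolding symmetric_monoidal_closed_def by (elim conjE) (simp only: Ball_def)

lemma tensm_hom [intro]:
  "f \<in> hom V A B \<Longrightarrow> g \<in> hom V C D \<Longrightarrow> tensm V f g \<in> hom V (tens V A C) (tens V B D)"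
  using smc unfolding symmetric_monoidal_closed_def by (elim conjE) (metis hom_arr hom_dom hom_cod)

lemma tensm_comp:
  "f \<in> hom V A B \<Longrightarrow> g \<in> hom V B C \<Longrightarrow> f' \<in> hom V A' B' \<Longrightarrow> g' \<in> hom V B' C' \<Longrightarrow>
   tensm V (g \<cdot> f) (g' \<cdot> f') = tensm V g g' \<cdot> tensm V f f'"
  using smc unfolding symmetric_monoidal_closed_def by (elim conjE) (metis hom_arr hom_dom hom_cod)

lemma unit_obj [intro]: "tunit V \<in> obj V"
  using smc unfolding symmetric_monoidal_closed_def by (elim conjE) (simp only: Ball_def)

lemma lam_hom [intro]: "A \<in> obj V \<Longrightarrow> lam V A \<in> hom V (tens V (tunit V) A) A"
  using smc unfolding symmetric_monoidal_closed_def by (elim conjE) (simp only: Ball_def)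

lemma lam_iso: "A \<in> obj V \<Longrightarrow> iso V (lam V A)"
  using smc unfolding symmetric_monoidal_closed_def by (elim conjE) (simp only: Ball_def)

lemma lam_natural: "f \<in> hom V A B \<Longrightarrow> lam V B \<cdot> tensm V (cid V (tunit V)) f = f \<cdot> lam V A"
  using smc unfolding symmetric_monoidal_closed_def by (elim conjE) (metis hom_arr hom_dom hom_cod)

lemma sigma_hom [intro]: "A \<in> obj V \<Longrightarrow> B \<in> obj V \<Longrightarrow> sigma V A B \<in> hom V (tens V A B) (tens V B A)"
  using smc unfolding symmetric_monoidal_closed_def by (elim conjE) (simp only: Ball_def)

lemma sigma_inverse: "A \<in> obj V \<Longrightarrow> B \<in> obj V \<Longrightarrow> sigma V B A \<cdot> sigma V A B = cid V (tens V A B)"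
  using smc unfolding symmetric_monoidal_closed_def by (elim conjE) (simp only: Ball_def)

lemma sigma_natural:
  "f \<in> hom V A B \<Longrightarrow> g \<in> hom V C D \<Longrightarrow> sigma V B D \<cdot> tensm V f g = tensm V g f \<cdot> sigma V A C"
  using smc unfolding symmetric_monoidal_closed_def by (elim conjE) (metis hom_arr hom_dom hom_cod)

lemma ihom_obj [intro]: "A \<in> obj V \<Longrightarrow> B \<in> obj V \<Longrightarrow> ihom V A B \<in> obj V"
  using smc unfolding symmetric_monoidal_closed_def by (elim conjE) (simp only: Ball_def)

lemma ev_hom [intro]: "A \<in> obj V \<Longrightarrow> B \<in> obj V \<Longrightarrow> ev V A B \<in> hom V (tens V (ihom V A B) A) B"
  using smc unfolding symmetric_monoidal_closed_def by (elim conjE) (simp only: Ball_def)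

lemma closed:
  "A \<in> obj V \<Longrightarrow> B \<in> obj V \<Longrightarrow> X \<in> obj V \<Longrightarrow> f \<in> hom V (tens V X A) B \<Longrightarrow>
   \<exists>!g. g \<in> hom V X (ihom V A B) \<and> ev V A B \<cdot> tensm V g (cid V A) = f"
  using smc unfolding symmetric_monoidal_closed_def by (elim conjE) (simp only: Ball_def)

definition uncurry :: "'o \<Rightarrow> 'o \<Rightarrow> 'm \<Rightarrow> 'm" where
  "uncurry A B g = ev V A B \<cdot> tensm V g (cid V A)"

definition curry :: "'o \<Rightarrow> 'o \<Rightarrow> 'o \<Rightarrow> 'm \<Rightarrow> 'm" where
  "curry X A B f = (THE g. g \<in> hom V X (ihom V A B) \<and> uncurry A B g = f)"

lemma uncurry_hom [intro]:
  "g \<in> hom V X (ihom V A B) \<Longrightarrow> A \<in> obj V \<Longrightarrow> B \<in> obj V \<Longrightarrow> uncurry A B g \<in> hom V (tens V X A) B"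
  unfolding uncurry_def using comp_hom[OF tensm_hom ev_hom] id_hom by blast

lemma curry_spec:
  assumes f: "f \<in> hom V (tens V X A) B" and X: "X \<in> obj V" and A: "A \<in> obj V"
  shows "curry X A B f \<in> hom V X (ihom V A B) \<and> uncurry A B (curry X A B f) = f"
  unfolding curry_def
  by (rule theI') (use closed[OF A hom_obj_cod[OF f] X f] in \<open>simp add: uncurry_def\<close>)

lemma curry_hom [intro]:
  "f \<in> hom V (tens V X A) B \<Longrightarrow> X \<in> obj V \<Longrightarrow> A \<in> obj V \<Longrightarrow> curry X A B f \<in> hom V X (ihom V A B)"
  using curry_spec by blast

lemma uncurry_curry [simp]:
  "f \<in> hom V (tens V X A) B \<Longrightarrow> X \<in> obj V \<Longrightarrow> A \<in> obj V \<Longrightarrow> uncurry A B (curry X A B f) = f"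
  using curry_spec by blast

lemma curry_uncurry [simp]:
  assumes g: "g \<in> hom V X (ihom V A B)" and A: "A \<in> obj V" and B: "B \<in> obj V"
  shows "curry X A B (uncurry A B g) = g"
  unfolding curry_def
proof (rule the1_equality)
  show "\<exists>!h. h \<in> hom V X (ihom V A B) \<and> uncurry A B h = uncurry A B g"
    using closed[OF A B hom_obj_dom[OF g] uncurry_hom[OF g A B]] by (simp add: uncurry_def)
qed (use g in blast)

lemma uncurry_inj:
  "g1 \<in> hom V X (ihom V A B) \<Longrightarrow> g2 \<in> hom V X (ihom V A B) \<Longrightarrow> A \<in> obj V \<Longrightarrow> B \<in> obj V \<Longrightarrow>
   uncurry A B g1 = uncurry A B g2 \<Longrightarrow> g1 = g2"
  by (metis curry_uncurry)

lemma uncurry_comp: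
  assumes g: "g \<in> hom V X (ihom V A B)" and h: "h \<in> hom V Y X" and A: "A \<in> obj V" and B: "B \<in> obj V"
  shows "uncurry A B (g \<cdot> h) = uncurry A B g \<cdot> tensm V h (cid V A)"
proof -
  have "tensm V (g \<cdot> h) (cid V A) = tensm V g (cid V A) \<cdot> tensm V h (cid V A)"
    using tensm_comp[OF h g id_hom[OF A] id_hom[OF A]] comp_id_left[OF id_hom[OF A]] by simp
  then show ?thesis
    unfolding uncurry_def
    using comp_assoc[OF tensm_hom[OF h id_hom[OF A]] tensm_hom[OF g id_hom[OF A]] ev_hom[OF A B]]
      by simp
qed

lemma ihom_r_eq_curry:
  "m \<in> hom V B1 B2 \<Longrightarrow> ihom_r V A m = curry (ihom V A B1) A B2 (m \<cdot> ev V A B1)"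
  unfolding ihom_r_def curry_def uncurry_def by (simp add: hom_dom hom_cod)

lemma ihom_l_eq_curry:
  "e \<in> hom V A1 A2 \<Longrightarrow>
   ihom_l V e B = curry (ihom V A2 B) A1 B (ev V A2 B \<cdot> tensm V (cid V (ihom V A2 B)) e)"
  unfolding ihom_l_def curry_def uncurry_def by (simp add: hom_dom hom_cod)

lemma ihom_r_hom [intro]:
  assumes m: "m \<in> hom V B1 B2" and A: "A \<in> obj V"
  shows "ihom_r V A m \<in> hom V (ihom V A B1) (ihom V A B2)"
  unfolding ihom_r_eq_curry[OF m]
  using comp_hom[OF ev_hom[OF A hom_obj_dom[OF m]] m] A hom_obj_dom[OF m] by blast

lemma uncurry_ihom_r:
  assumes m: "m \<in> hom V B1 B2" and A: "A \<in> obj V"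
  shows "uncurry A B2 (ihom_r V A m) = m \<cdot> ev V A B1"
  unfolding ihom_r_eq_curry[OF m]
  by (rule uncurry_curry[OF comp_hom[OF ev_hom[OF A hom_obj_dom[OF m]] m]
    ihom_obj[OF A hom_obj_dom[OF m]] A])

lemma ihom_l_uncurried_hom:
  assumes e: "e \<in> hom V A1 A2" and B: "B \<in> obj V"
  shows "ev V A2 B \<cdot> tensm V (cid V (ihom V A2 B)) e \<in> hom V (tens V (ihom V A2 B) A1) B"
  using comp_hom[OF tensm_hom[OF id_hom e] ev_hom] hom_obj_cod[OF e] B by blast

lemma ihom_l_hom [intro]:
  assumes e: "e \<in> hom V A1 A2" and B: "B \<in> obj V"
  shows "ihom_l V e B \<in> hom V (ihom V A2 B) (ihom V A1 B)"
  unfolding ihom_l_eq_curry[OF e]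
  using ihom_l_uncurried_hom[OF e B] hom_obj_dom[OF e] hom_obj_cod[OF e] B by blast

lemma uncurry_ihom_l:
  assumes e: "e \<in> hom V A1 A2" and B: "B \<in> obj V"
  shows "uncurry A1 B (ihom_l V e B) = ev V A2 B \<cdot> tensm V (cid V (ihom V A2 B)) e"
  unfolding ihom_l_eq_curry[OF e]
  by (rule uncurry_curry[OF ihom_l_uncurried_hom[OF e B] ihom_obj[OF hom_obj_cod[OF e] B]
    hom_obj_dom[OF e]])

lemma uncurry_ihom_r_comp:
  assumes g: "g \<in> hom V X (ihom V A B1)" and m: "m \<in> hom V B1 B2" and A: "A \<in> obj V"
  shows "uncurry A B2 (ihom_r V A m \<cdot> g) = m \<cdot> uncurry A B1 g"
proof -
  have B: "B1 \<in> obj V" "B2 \<in> obj V" using m hom_obj_dom hom_obj_cod by blast+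
  have "uncurry A B2 (ihom_r V A m \<cdot> g) = uncurry A B2 (ihom_r V A m) \<cdot> tensm V g (cid V A)"
    using uncurry_comp[OF ihom_r_hom[OF m A] g A B(2)] .
  also have "\<dots> = (m \<cdot> ev V A B1) \<cdot> tensm V g (cid V A)" using uncurry_ihom_r[OF m A] by simp
  also have "\<dots> = m \<cdot> uncurry A B1 g" unfolding uncurry_def
    using comp_assoc[OF tensm_hom[OF g id_hom[OF A]] ev_hom[OF A B(1)] m] by simp
  finally show ?thesis .
qed

lemma uncurry_ihom_l_comp:
  assumes g: "g \<in> hom V X (ihom V A2 B)" and e: "e \<in> hom V A1 A2" and B: "B \<in> obj V"
  shows "uncurry A1 B (ihom_l V e B \<cdot> g) = uncurry A2 B g \<cdot> tensm V (cid V X) e"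
proof -
  have A: "A1 \<in> obj V" "A2 \<in> obj V" using e hom_obj_dom hom_obj_cod by blast+
  have X: "X \<in> obj V" using g hom_obj_dom by blast
  let ?I = "ihom V A2 B"
  have I: "?I \<in> obj V" using A B by blast
  have "uncurry A1 B (ihom_l V e B \<cdot> g) = uncurry A1 B (ihom_l V e B) \<cdot> tensm V g (cid V A1)"
    using uncurry_comp[OF ihom_l_hom[OF e B] g A(1) B] .
  also have "\<dots> = ev V A2 B \<cdot> (tensm V (cid V ?I) e \<cdot> tensm V g (cid V A1))"
    using uncurry_ihom_l[OF e B]
      comp_assoc[OF tensm_hom[OF g id_hom[OF A(1)]] tensm_hom[OF id_hom[OF I] e] ev_hom[OF A(2) B]]
    by simp
  also have "tensm V (cid V ?I) e \<cdot> tensm V g (cid V A1)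
      = tensm V g (cid V A2) \<cdot> tensm V (cid V X) e"
    \<comment> \<open>both sides equal \<open>g \<otimes> e\<close>\<close>
    using tensm_comp[OF g id_hom[OF I] id_hom[OF A(1)] e]
      tensm_comp[OF id_hom[OF X] g e id_hom[OF A(2)]]
      g e by simp
  also have "ev V A2 B \<cdot> (tensm V g (cid V A2) \<cdot> tensm V (cid V X) e)
      = uncurry A2 B g \<cdot> tensm V (cid V X) e"
    unfolding uncurry_def
    using comp_assoc[OF tensm_hom[OF id_hom[OF X] e] tensm_hom[OF g id_hom[OF A(2)]]
      ev_hom[OF A(2) B]] .
  finally show ?thesis .
qed

lemma ihom_r_comp:
  assumes f: "f \<in> hom V B1 B2" and g: "g \<in> hom V B2 B3" and A: "A \<in> obj V"
  shows "ihom_r V A (g \<cdot> f) = ihom_r V A g \<cdot> ihom_r V A f"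
proof (rule uncurry_inj)
  have B: "B1 \<in> obj V" "B3 \<in> obj V" using f g hom_obj_dom hom_obj_cod by blast+
  show "ihom_r V A (g \<cdot> f) \<in> hom V (ihom V A B1) (ihom V A B3)" using comp_hom[OF f g] A by blast
  show "ihom_r V A g \<cdot> ihom_r V A f \<in> hom V (ihom V A B1) (ihom V A B3)"
    using comp_hom[OF ihom_r_hom[OF f A] ihom_r_hom[OF g A]] .
  have "uncurry A B3 (ihom_r V A g \<cdot> ihom_r V A f) = g \<cdot> (f \<cdot> ev V A B1)"
    using uncurry_ihom_r_comp[OF ihom_r_hom[OF f A] g A] uncurry_ihom_r[OF f A] by simp
  also have "\<dots> = uncurry A B3 (ihom_r V A (g \<cdot> f))"
    using comp_assoc[OF ev_hom[OF A B(1)] f g] uncurry_ihom_r[OF comp_hom[OF f g] A] by simp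
  finally show "uncurry A B3 (ihom_r V A (g \<cdot> f)) = uncurry A B3 (ihom_r V A g \<cdot> ihom_r V A f)" ..
qed (use A hom_obj_cod[OF g] in blast)+

lemma mono_ihom_r:
  assumes mono: "mono V m" and m: "m \<in> hom V B1 B2" and A: "A \<in> obj V"
  shows "mono V (ihom_r V A m)"
proof (rule monoI_hom[OF ihom_r_hom[OF m A]])
  have B1: "B1 \<in> obj V" using hom_obj_dom[OF m] .
  fix X g h assume g: "g \<in> hom V X (ihom V A B1)" and h: "h \<in> hom V X (ihom V A B1)"
    and eq: "ihom_r V A m \<cdot> g = ihom_r V A m \<cdot> h"
  have "m \<cdot> uncurry A B1 g = m \<cdot> uncurry A B1 h"
    using uncurry_ihom_r_comp[OF g m A] uncurry_ihom_r_comp[OF h m A] eq by simp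
  then have "uncurry A B1 g = uncurry A B1 h"
    by (rule mono_cancel[OF mono m uncurry_hom[OF g A B1] uncurry_hom[OF h A B1]])
  then show "g = h" by (rule uncurry_inj[OF g h A B1])
qed

lemma epi_tensor_right:
  assumes ep: "epi V e" and e: "e \<in> hom V A1 A2" and X: "X \<in> obj V"
  shows "epi V (tensm V e (cid V X))"
proof (rule epiI_hom[OF tensm_hom[OF e id_hom[OF X]]])
  have A2: "A2 \<in> obj V" using hom_obj_cod[OF e] .
  fix Y g h assume g: "g \<in> hom V (tens V A2 X) Y" and h: "h \<in> hom V (tens V A2 X) Y"
    and eq: "g \<cdot> tensm V e (cid V X) = h \<cdot> tensm V e (cid V X)"
  have Y: "Y \<in> obj V" using hom_obj_cod[OF g] .
  have uncurry_curry_e: "uncurry X Y (curry A2 X Y k \<cdot> e) = k \<cdot> tensm V e (cid V X)"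
    if k: "k \<in> hom V (tens V A2 X) Y" for k
    using uncurry_comp[OF curry_hom[OF k A2 X] e X Y] uncurry_curry[OF k A2 X] by simp
  have "curry A2 X Y g \<cdot> e = curry A2 X Y h \<cdot> e"
    by (rule uncurry_inj[OF comp_hom[OF e curry_hom[OF g A2 X]]
      comp_hom[OF e curry_hom[OF h A2 X]] X Y])
      (simp add: uncurry_curry_e g h eq)
  then have "curry A2 X Y g = curry A2 X Y h"
    by (rule epi_cancel[OF ep e curry_hom[OF g A2 X] curry_hom[OF h A2 X]])
  then show "g = h" using uncurry_curry[OF g A2 X] uncurry_curry[OF h A2 X] by metis
qed

lemma sigma_epi: "A \<in> obj V \<Longrightarrow> B \<in> obj V \<Longrightarrow> epi V (sigma V A B)"
  using split_epi[OF sigma_hom sigma_hom sigma_inverse] by blast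

lemma epi_tensor_left:
  assumes ep: "epi V e" and e: "e \<in> hom V A1 A2" and X: "X \<in> obj V"
  shows "epi V (tensm V (cid V X) e)"
proof -
  have A: "A1 \<in> obj V" "A2 \<in> obj V" using e hom_obj_dom hom_obj_cod by blast+
  have "sigma V A2 X \<cdot> (tensm V e (cid V X) \<cdot> sigma V X A1)
      = (tensm V (cid V X) e \<cdot> sigma V A1 X) \<cdot> sigma V X A1"
    using comp_assoc[OF sigma_hom[OF X A(1)] tensm_hom[OF e id_hom[OF X]] sigma_hom[OF A(2) X]]
      sigma_natural[OF e id_hom[OF X]] by simp
  also have "\<dots> = tensm V (cid V X) e"
    using comp_assoc[OF sigma_hom[OF X A(1)] sigma_hom[OF A(1) X] tensm_hom[OF id_hom[OF X] e]]
      sigma_inverse[OF X A(1)] tensm_hom[OF id_hom[OF X] e] by simp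
  finally show ?thesis
    using epi_comp[OF epi_comp[OF sigma_epi[OF X A(1)] sigma_hom[OF X A(1)]
          epi_tensor_right[OF ep e X] tensm_hom[OF e id_hom[OF X]]]
        comp_hom[OF sigma_hom[OF X A(1)] tensm_hom[OF e id_hom[OF X]]] sigma_epi[OF A(2) X]
          sigma_hom[OF A(2) X]]
    by simp
qed

section \<open>Enriched epis and orthogonality\<close>

definition name :: "'o \<Rightarrow> 'o \<Rightarrow> 'm \<Rightarrow> 'm" where
  "name A B k = curry (tunit V) A B (k \<cdot> lam V A)"

lemma name_hom [intro]: "k \<in> hom V A B \<Longrightarrow> name A B k \<in> hom V (tunit V) (ihom V A B)"
  unfolding name_def using comp_hom[OF lam_hom] hom_obj_dom by blast

lemma uncurry_name: "k \<in> hom V A B \<Longrightarrow> uncurry A B (name A B k) = k \<cdot> lam V A"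
  unfolding name_def using uncurry_curry[OF comp_hom[OF lam_hom] unit_obj] hom_obj_dom by blast

lemma name_inj:
  assumes k1: "k1 \<in> hom V A B" and k2: "k2 \<in> hom V A B" and eq: "name A B k1 = name A B k2"
  shows "k1 = k2"
proof -
  have A: "A \<in> obj V" using hom_obj_dom[OF k1] .
  have "k1 \<cdot> lam V A = k2 \<cdot> lam V A" using uncurry_name[OF k1] uncurry_name[OF k2] eq by simp
  then show ?thesis by (rule epi_cancel[OF iso_epi[OF lam_iso[OF A]] lam_hom[OF A] k1 k2])
qed

lemma name_surj:
  assumes x: "x \<in> hom V (tunit V) (ihom V A B)" and A: "A \<in> obj V" and B: "B \<in> obj V"
  shows "\<exists>k\<in>hom V A B. name A B k = x"
proof -
  obtain l' where l': "l' \<in> hom V A (tens V (tunit V) A)"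
    "l' \<cdot> lam V A = cid V (tens V (tunit V) A)"
    using lam_iso[OF A] unfolding iso_def hom_dom[OF lam_hom[OF A]] hom_cod[OF lam_hom[OF A]]
      by blast
  define k where "k = uncurry A B x \<cdot> l'"
  have k: "k \<in> hom V A B" unfolding k_def using comp_hom[OF l'(1) uncurry_hom[OF x A B]] .
  have "k \<cdot> lam V A = uncurry A B x"
    using comp_assoc[OF lam_hom[OF A] l'(1) uncurry_hom[OF x A B]] l'(2) uncurry_hom[OF x A B]
    unfolding k_def by simp
  then have "name A B k = x" unfolding name_def using x A B by simp
  with k show ?thesis by blast
qed

lemma ihom_r_name:
  assumes m: "m \<in> hom V B1 B2" and k: "k \<in> hom V A B1"
  shows "ihom_r V A m \<cdot> name A B1 k = name A B2 (m \<cdot> k)"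
proof (rule uncurry_inj)
  have A: "A \<in> obj V" using hom_obj_dom[OF k] .
  show "ihom_r V A m \<cdot> name A B1 k \<in> hom V (tunit V) (ihom V A B2)"
    using comp_hom[OF name_hom[OF k] ihom_r_hom[OF m A]] .
  show "name A B2 (m \<cdot> k) \<in> hom V (tunit V) (ihom V A B2)" using name_hom[OF comp_hom[OF k m]] .
  show "uncurry A B2 (ihom_r V A m \<cdot> name A B1 k) = uncurry A B2 (name A B2 (m \<cdot> k))"
    using uncurry_ihom_r_comp[OF name_hom[OF k] m A] uncurry_name[OF k]
      uncurry_name[OF comp_hom[OF k m]]
      comp_assoc[OF lam_hom[OF A] k m] by simp
qed (use hom_obj_dom[OF k] hom_obj_cod[OF m] in blast)+

lemma ihom_l_name:
  assumes e: "e \<in> hom V A1 A2" and k: "k \<in> hom V A2 B"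
  shows "ihom_l V e B \<cdot> name A2 B k = name A1 B (k \<cdot> e)"
proof (rule uncurry_inj)
  have A: "A1 \<in> obj V" "A2 \<in> obj V" and B: "B \<in> obj V"
    using e k hom_obj_dom hom_obj_cod by blast+
  show "ihom_l V e B \<cdot> name A2 B k \<in> hom V (tunit V) (ihom V A1 B)"
    using comp_hom[OF name_hom[OF k] ihom_l_hom[OF e B]] .
  show "name A1 B (k \<cdot> e) \<in> hom V (tunit V) (ihom V A1 B)" using name_hom[OF comp_hom[OF e k]] .
  have "uncurry A1 B (ihom_l V e B \<cdot> name A2 B k) = k \<cdot> (lam V A2 \<cdot> tensm V (cid V (tunit V)) e)"
    using uncurry_ihom_l_comp[OF name_hom[OF k] e B] uncurry_name[OF k]
      comp_assoc[OF tensm_hom[OF id_hom[OF unit_obj] e] lam_hom[OF A(2)] k] by simp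
  also have "\<dots> = uncurry A1 B (name A1 B (k \<cdot> e))"
    using lam_natural[OF e] comp_assoc[OF lam_hom[OF A(1)] e k] uncurry_name[OF comp_hom[OF e k]]
      by simp
  finally show "uncurry A1 B (ihom_l V e B \<cdot> name A2 B k) = uncurry A1 B (name A1 B (k \<cdot> e))" .
qed (use e k hom_obj_dom hom_obj_cod in blast)+

lemma Epis_subset_VEpis: "Epis V \<subseteq> VEpis V"
proof
  fix e assume "e \<in> Epis V"
  then have ep: "epi V e" and e: "e \<in> hom V (cdom V e) (ccod V e)"
    unfolding Epis_def using arr_hom epi_arr by blast+
  have "mono V (ihom_l V e B)" if B: "B \<in> obj V" for B
  proof (rule monoI_hom[OF ihom_l_hom[OF e B]])
    fix X g h assume g: "g \<in> hom V X (ihom V (ccod V e) B)"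
      and h: "h \<in> hom V X (ihom V (ccod V e) B)"
      and eq: "ihom_l V e B \<cdot> g = ihom_l V e B \<cdot> h"
    have A2: "ccod V e \<in> obj V" and X: "X \<in> obj V" using e g hom_obj_cod hom_obj_dom by blast+
    have "uncurry (ccod V e) B g \<cdot> tensm V (cid V X) e
        = uncurry (ccod V e) B h \<cdot> tensm V (cid V X) e"
      using uncurry_ihom_l_comp[OF g e B] uncurry_ihom_l_comp[OF h e B] eq by simp
    then have "uncurry (ccod V e) B g = uncurry (ccod V e) B h"
      by (rule epi_cancel[OF epi_tensor_left[OF ep e X] tensm_hom[OF id_hom[OF X] e]
            uncurry_hom[OF g A2 B] uncurry_hom[OF h A2 B]])
    then show "g = h" by (rule uncurry_inj[OF g h A2 B])
  qed
  then show "e \<in> VEpis V" unfolding VEpis_def using epi_arr[OF ep] by blast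
qed

lemma VEpis_subset_Epis: "VEpis V \<subseteq> Epis V"
proof
  fix e assume "e \<in> VEpis V"
  then have e: "e \<in> hom V (cdom V e) (ccod V e)" and mono: "\<And>B. B \<in> obj V \<Longrightarrow> mono V (ihom_l V e B)"
    unfolding VEpis_def using arr_hom by blast+
  have "epi V e"
  proof (rule epiI_hom[OF e])
    fix Y g h assume g: "g \<in> hom V (ccod V e) Y" and h: "h \<in> hom V (ccod V e) Y"
      and eq: "g \<cdot> e = h \<cdot> e"
    have Y: "Y \<in> obj V" using hom_obj_cod[OF g] .
    have "ihom_l V e Y \<cdot> name (ccod V e) Y g = ihom_l V e Y \<cdot> name (ccod V e) Y h"
      using ihom_l_name[OF e g] ihom_l_name[OF e h] eq by simp
    then have "name (ccod V e) Y g = name (ccod V e) Y h"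
      by (rule mono_cancel[OF mono[OF Y] ihom_l_hom[OF e Y] name_hom[OF g] name_hom[OF h]])
    then show "g = h" by (rule name_inj[OF g h])
  qed
  then show "e \<in> Epis V" unfolding Epis_def by blast
qed

lemma VEpis_eq_Epis: "VEpis V = Epis V"
  using VEpis_subset_Epis Epis_subset_VEpis by blast

lemma Vorth_square:
  assumes e: "e \<in> hom V A1 A2" and m: "m \<in> hom V B1 B2"
  shows "ihom_l V e B2 \<cdot> ihom_r V A2 m = ihom_r V A1 m \<cdot> ihom_l V e B1"
proof (rule uncurry_inj)
  have A: "A1 \<in> obj V" "A2 \<in> obj V" and B: "B1 \<in> obj V" "B2 \<in> obj V"
    using e m hom_obj_dom hom_obj_cod by blast+
  let ?t = "tensm V (cid V (ihom V A2 B1)) e"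
  show "ihom_l V e B2 \<cdot> ihom_r V A2 m \<in> hom V (ihom V A2 B1) (ihom V A1 B2)"
    using comp_hom[OF ihom_r_hom[OF m A(2)] ihom_l_hom[OF e B(2)]] .
  show "ihom_r V A1 m \<cdot> ihom_l V e B1 \<in> hom V (ihom V A2 B1) (ihom V A1 B2)"
    using comp_hom[OF ihom_l_hom[OF e B(1)] ihom_r_hom[OF m A(1)]] .
  have "uncurry A1 B2 (ihom_l V e B2 \<cdot> ihom_r V A2 m) = (m \<cdot> ev V A2 B1) \<cdot> ?t"
    using uncurry_ihom_l_comp[OF ihom_r_hom[OF m A(2)] e B(2)] uncurry_ihom_r[OF m A(2)] by simp
  also have "\<dots> = m \<cdot> uncurry A1 B1 (ihom_l V e B1)"
    using comp_assoc[OF tensm_hom[OF id_hom[OF ihom_obj[OF A(2) B(1)]] e] ev_hom[OF A(2) B(1)] m]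
      uncurry_ihom_l[OF e B(1)] by simp
  also have "\<dots> = uncurry A1 B2 (ihom_r V A1 m \<cdot> ihom_l V e B1)"
    using uncurry_ihom_r_comp[OF ihom_l_hom[OF e B(1)] m A(1)] by simp
  finally show
    "uncurry A1 B2 (ihom_l V e B2 \<cdot> ihom_r V A2 m)
      = uncurry A1 B2 (ihom_r V A1 m \<cdot> ihom_l V e B1)" .
qed (use e m hom_obj_dom hom_obj_cod in blast)+

lemma Vorth_iff:
  assumes e: "e \<in> hom V A1 A2" and m: "m \<in> hom V B1 B2"
  shows "Vorth V e m \<longleftrightarrow>
    (\<forall>X\<in>obj V. \<forall>x1\<in>hom V X (ihom V A2 B2). \<forall>x2\<in>hom V X (ihom V A1 B1).
       ihom_l V e B2 \<cdot> x1 = ihom_r V A1 m \<cdot> x2 \<longrightarrow>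
       (\<exists>!w. w \<in> hom V X (ihom V A2 B1) \<and> ihom_r V A2 m \<cdot> w = x1 \<and> ihom_l V e B1 \<cdot> w = x2))"
proof -
  have A: "A1 \<in> obj V" "A2 \<in> obj V" and B: "B1 \<in> obj V" "B2 \<in> obj V"
    using e m hom_obj_dom hom_obj_cod by blast+
  note r2 = ihom_r_hom[OF m A(2)] and r1 = ihom_r_hom[OF m A(1)]
    and l1 = ihom_l_hom[OF e B(1)] and l2 = ihom_l_hom[OF e B(2)]
  show ?thesis
    unfolding Vorth_def is_pullback_def hom_dom[OF e] hom_cod[OF e] hom_dom[OF m] hom_cod[OF m]
      hom_dom[OF r2] hom_dom[OF l2] hom_dom[OF r1] hom_cod[OF l2] hom_cod[OF r1]
    using hom_arr[OF e] hom_arr[OF m] hom_arr[OF l2] hom_arr[OF r1] r2 l1 Vorth_square[OF e m]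
      by simp
qed

lemma Vorth_imp_orth:
  assumes Vo: "Vorth V e m" and e: "e \<in> hom V A1 A2" and m: "m \<in> hom V B1 B2"
  shows "orth V e m"
  unfolding orth_def hom_dom[OF e] hom_cod[OF e] hom_dom[OF m] hom_cod[OF m]
proof (intro conjI ballI impI)
  show "e \<in> arr V" "m \<in> arr V" using e m hom_arr by blast+
  have A: "A1 \<in> obj V" "A2 \<in> obj V" and B: "B1 \<in> obj V" "B2 \<in> obj V"
    using e m hom_obj_dom hom_obj_cod by blast+
  fix u v assume u: "u \<in> hom V A1 B1" and v: "v \<in> hom V A2 B2" and sq: "m \<cdot> u = v \<cdot> e"
  have filler_iff_name: "(d \<cdot> e = u \<and> m \<cdot> d = v) \<longleftrightarrow>
      (ihom_r V A2 m \<cdot> name A2 B1 d = name A2 B2 v \<and> ihom_l V e B1 \<cdot> name A2 B1 d = name A1 B1 u)"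
    if d: "d \<in> hom V A2 B1" for d
    unfolding ihom_r_name[OF m d] ihom_l_name[OF e d]
    using name_inj[OF comp_hom[OF d m] v] name_inj[OF comp_hom[OF e d] u] by blast
  have "ihom_l V e B2 \<cdot> name A2 B2 v = ihom_r V A1 m \<cdot> name A1 B1 u"
    using ihom_l_name[OF e v] ihom_r_name[OF m u] sq by simp
  then have "\<exists>!w. w \<in> hom V (tunit V) (ihom V A2 B1) \<and>
      ihom_r V A2 m \<cdot> w = name A2 B2 v \<and> ihom_l V e B1 \<cdot> w = name A1 B1 u"
    using Vo[unfolded Vorth_iff[OF e m]] unit_obj name_hom[OF v] name_hom[OF u] by simp
  then obtain w where w: "w \<in> hom V (tunit V) (ihom V A2 B1)"
      "ihom_r V A2 m \<cdot> w = name A2 B2 v" "ihom_l V e B1 \<cdot> w = name A1 B1 u"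
    and w_unique: "\<And>w'. w' \<in> hom V (tunit V) (ihom V A2 B1) \<and>
      ihom_r V A2 m \<cdot> w' = name A2 B2 v \<and> ihom_l V e B1 \<cdot> w' = name A1 B1 u \<Longrightarrow> w' = w"
    by (elim ex1E) blast
  obtain d where d: "d \<in> hom V A2 B1" "name A2 B1 d = w" using name_surj[OF w(1) A(2) B(1)] by blast
  show "\<exists>!d. d \<in> hom V A2 B1 \<and> d \<cdot> e = u \<and> m \<cdot> d = v"
  proof (rule ex1I[of _ d])
    show "d \<in> hom V A2 B1 \<and> d \<cdot> e = u \<and> m \<cdot> d = v" using filler_iff_name[OF d(1)] d w by simp
    fix d' assume d': "d' \<in> hom V A2 B1 \<and> d' \<cdot> e = u \<and> m \<cdot> d' = v"
    then have "name A2 B1 d' = w"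
      using w_unique[of "name A2 B1 d'"] filler_iff_name[of d'] name_hom[of d'] by simp
    then show "d' = d" using name_inj[of d' A2 B1 d] d d' by simp
  qed
qed

lemma epi_StrMonos_imp_Vorth:
  assumes ep: "epi V e" and ms: "m \<in> StrMonos V" and e: "e \<in> hom V A1 A2" and m: "m \<in> hom V B1 B2"
  shows "Vorth V e m"
  unfolding Vorth_iff[OF e m]
proof (intro ballI impI)
  have A: "A1 \<in> obj V" "A2 \<in> obj V" and B: "B1 \<in> obj V" "B2 \<in> obj V"
    using e m hom_obj_dom hom_obj_cod by blast+
  fix X x1 x2 assume X: "X \<in> obj V" and x1: "x1 \<in> hom V X (ihom V A2 B2)"
    and x2: "x2 \<in> hom V X (ihom V A1 B1)" and eq: "ihom_l V e B2 \<cdot> x1 = ihom_r V A1 m \<cdot> x2"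
  let ?t = "tensm V (cid V X) e"
  have t: "?t \<in> hom V (tens V X A1) (tens V X A2)" using tensm_hom[OF id_hom[OF X] e] .
  have "m \<cdot> uncurry A1 B1 x2 = uncurry A2 B2 x1 \<cdot> ?t"
    using uncurry_ihom_r_comp[OF x2 m A(1)] uncurry_ihom_l_comp[OF x1 e B(2)] eq by simp
  then obtain d where d: "d \<in> hom V (tens V X A2) B1" "d \<cdot> ?t = uncurry A1 B1 x2"
    "m \<cdot> d = uncurry A2 B2 x1"
    using orthD[OF StrMonos_orth[OF ms epi_tensor_left[OF ep e X]] t m
        uncurry_hom[OF x2 A(1) B(1)] uncurry_hom[OF x1 A(2) B(2)]] by blast
  define w where "w = curry X A2 B1 d"
  have w: "w \<in> hom V X (ihom V A2 B1)" "uncurry A2 B1 w = d"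
    unfolding w_def using curry_spec[OF d(1) X A(2)] by blast+
  have w1: "ihom_r V A2 m \<cdot> w = x1"
    by (rule uncurry_inj[OF comp_hom[OF w(1) ihom_r_hom[OF m A(2)]] x1 A(2) B(2)])
      (use uncurry_ihom_r_comp[OF w(1) m A(2)] w(2) d(3) in simp)
  have w2: "ihom_l V e B1 \<cdot> w = x2"
    by (rule uncurry_inj[OF comp_hom[OF w(1) ihom_l_hom[OF e B(1)]] x2 A(1) B(1)])
      (use uncurry_ihom_l_comp[OF w(1) e B(1)] w(2) d(2) in simp)
  show "\<exists>!w. w \<in> hom V X (ihom V A2 B1) \<and> ihom_r V A2 m \<cdot> w = x1 \<and> ihom_l V e B1 \<cdot> w = x2"
  proof (rule ex1I[of _ w])
    fix w' assume "w' \<in> hom V X (ihom V A2 B1) \<and> ihom_r V A2 m \<cdot> w' = x1 \<and> ihom_l V e B1 \<cdot> w' = x2"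
    then show "w' = w"
      by (intro mono_cancel[OF mono_ihom_r[OF StrMonos_mono[OF ms] m A(2)] ihom_r_hom[OF m A(2)] _
        w(1)])
        (simp_all add: w1)
  qed (use w(1) w1 w2 in blast)
qed

lemma StrMonos_subset_VMonos: "StrMonos V \<subseteq> VMonos V"
proof
  fix m assume "m \<in> StrMonos V"
  then have mono: "mono V m" by (rule StrMonos_mono)
  have "mono V (ihom_r V A m)" if "A \<in> obj V" for A
    using mono_ihom_r[OF mono arr_hom[OF mono_arr[OF mono]] that] .
  with mono_arr[OF mono] show "m \<in> VMonos V" unfolding VMonos_def by blast
qed

lemma Vorth_Epis_StrMonos: "e \<in> Epis V \<Longrightarrow> m \<in> StrMonos V \<Longrightarrow> Vorth V e m"
  unfolding Epis_def
  using epi_StrMonos_imp_Vorth[OF _ _ arr_hom[OF epi_arr] arr_hom[OF mono_arr[OF StrMonos_mono]]]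
    by blast

lemma Vright_Epis:
  assumes fwc: "finitely_well_complete V"
  shows "Vright V (Epis V) = StrMonos V"
proof
  show "Vright V (Epis V) \<subseteq> StrMonos V"
  proof
    fix m assume "m \<in> Vright V (Epis V)"
    then have m: "m \<in> hom V (cdom V m) (ccod V m)" and Vo: "\<And>e. epi V e \<Longrightarrow> Vorth V e m"
      unfolding Vright_def Epis_def using arr_hom by blast+
    have "orth V e m" if "epi V e" for e
      using Vorth_imp_orth[OF Vo[OF that] arr_hom[OF epi_arr[OF that]] m] .
    then show "m \<in> StrMonos V" by (rule orth_epis_imp_StrMonos[OF fwc m])
  qed
  show "StrMonos V \<subseteq> Vright V (Epis V)"
    unfolding Vright_def using Vorth_Epis_StrMonos mono_arr[OF StrMonos_mono] by blast
qed

lemma Vleft_StrMonos: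
  assumes fwc: "finitely_well_complete V"
  shows "Vleft V (StrMonos V) = Epis V"
proof
  show "Vleft V (StrMonos V) \<subseteq> Epis V"
  proof
    fix e assume "e \<in> Vleft V (StrMonos V)"
    then have e: "e \<in> hom V (cdom V e) (ccod V e)" and Vo: "\<And>m. m \<in> StrMonos V \<Longrightarrow> Vorth V e m"
      unfolding Vleft_def using arr_hom by blast+
    have "orth V e m" if "m \<in> StrMonos V" for m
      using Vorth_imp_orth[OF Vo[OF that] e arr_hom[OF mono_arr[OF StrMonos_mono[OF that]]]] .
    then have "epi V e" by (rule orth_StrMonos_imp_epi[OF fwc e])
    then show "e \<in> Epis V" unfolding Epis_def by blast
  qed
  show "Epis V \<subseteq> Vleft V (StrMonos V)"
    unfolding Vleft_def Epis_def using Vorth_Epis_StrMonos epi_arr unfolding Epis_def by blast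
qed

lemma VStrMonos_eq_StrMonos: "finitely_well_complete V \<Longrightarrow> VStrMonos V = StrMonos V"
  unfolding VStrMonos_def VEpis_eq_Epis using Vright_Epis StrMonos_subset_VMonos by blast

section \<open>Internal homs preserve limits\<close>

lemma is_cone_ihom_r:
  assumes J: "category J" and F: "is_functor J V Do Da" and c: "is_cone J V Do Da L l"
    and A: "A \<in> obj V"
  shows "is_cone J V (\<lambda>j. ihom V A (Do j)) (\<lambda>u. ihom_r V A (Da u))
           (ihom V A L) (\<lambda>j. ihom_r V A (l j))"
  unfolding is_cone_def
proof (intro conjI ballI)
  have L: "L \<in> obj V" and l: "\<And>j. j \<in> obj J \<Longrightarrow> l j \<in> hom V L (Do j)"
    and l_comm: "\<And>u. u \<in> arr J \<Longrightarrow> Da u \<cdot> l (cdom J u) = l (ccod J u)"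
    using c unfolding is_cone_def by blast+
  show "ihom V A L \<in> obj V" using A L by blast
  show "ihom_r V A (l j) \<in> hom V (ihom V A L) (ihom V A (Do j))" if "j \<in> obj J" for j
    using l[OF that] A by blast
  fix u assume u: "u \<in> arr J"
  have dom: "cdom J u \<in> obj J" and Du: "Da u \<in> hom V (Do (cdom J u)) (Do (ccod J u))"
    using J F u unfolding category_def is_functor_def by blast+
  show "ihom_r V A (Da u) \<cdot> ihom_r V A (l (cdom J u)) = ihom_r V A (l (ccod J u))"
    using ihom_r_comp[OF l[OF dom] Du A] l_comm[OF u] by simp
qed

lemma is_cone_uncurry:
  assumes J: "category J" and F: "is_functor J V Do Da" and A: "A \<in> obj V"
    and c: "is_cone J V (\<lambda>j. ihom V A (Do j)) (\<lambda>u. ihom_r V A (Da u)) X x"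
  shows "is_cone J V Do Da (tens V X A) (\<lambda>j. uncurry A (Do j) (x j))"
  unfolding is_cone_def
proof (intro conjI ballI)
  have X: "X \<in> obj V" and x: "\<And>j. j \<in> obj J \<Longrightarrow> x j \<in> hom V X (ihom V A (Do j))"
    and x_comm: "\<And>u. u \<in> arr J \<Longrightarrow> ihom_r V A (Da u) \<cdot> x (cdom J u) = x (ccod J u)"
    using c unfolding is_cone_def by blast+
  have D: "\<And>j. j \<in> obj J \<Longrightarrow> Do j \<in> obj V" using F unfolding is_functor_def by blast
  show "tens V X A \<in> obj V" using X A by blast
  show "uncurry A (Do j) (x j) \<in> hom V (tens V X A) (Do j)" if "j \<in> obj J" for j
    using x[OF that] A D[OF that] by blast
  fix u assume u: "u \<in> arr J"
  have dom: "cdom J u \<in> obj J" and Du: "Da u \<in> hom V (Do (cdom J u)) (Do (ccod J u))"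
    using J F u unfolding category_def is_functor_def by blast+
  show "Da u \<cdot> uncurry A (Do (cdom J u)) (x (cdom J u)) = uncurry A (Do (ccod J u)) (x (ccod J u))"
    using uncurry_ihom_r_comp[OF x[OF dom] Du A] x_comm[OF u] by simp
qed

lemma is_limit_ihom_r:
  assumes J: "category J" and F: "is_functor J V Do Da" and lim: "is_limit J V Do Da L l"
    and A: "A \<in> obj V"
  shows "is_limit J V (\<lambda>j. ihom V A (Do j)) (\<lambda>u. ihom_r V A (Da u))
           (ihom V A L) (\<lambda>j. ihom_r V A (l j))"
  unfolding is_limit_def
proof (intro conjI allI impI)
  have c: "is_cone J V Do Da L l"
    and lift: "\<forall>X x. is_cone J V Do Da X x \<longrightarrow> (\<exists>!w. w \<in> hom V X L \<and> (\<forall>j\<in>obj J. l j \<cdot> w = x j))"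
    using lim unfolding is_limit_def by blast+
  have L: "L \<in> obj V" and l: "\<And>j. j \<in> obj J \<Longrightarrow> l j \<in> hom V L (Do j)"
    using c unfolding is_cone_def by blast+
  have D: "\<And>j. j \<in> obj J \<Longrightarrow> Do j \<in> obj V" using F unfolding is_functor_def by blast
  show "is_cone J V (\<lambda>j. ihom V A (Do j)) (\<lambda>u. ihom_r V A (Da u))
          (ihom V A L) (\<lambda>j. ihom_r V A (l j))"
    using is_cone_ihom_r[OF J F c A] .
  fix X x assume xc: "is_cone J V (\<lambda>j. ihom V A (Do j)) (\<lambda>u. ihom_r V A (Da u)) X x"
  have X: "X \<in> obj V" and x: "\<And>j. j \<in> obj J \<Longrightarrow> x j \<in> hom V X (ihom V A (Do j))"
    using xc unfolding is_cone_def by blast+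
  have factors_iff: "(\<forall>j\<in>obj J. ihom_r V A (l j) \<cdot> c = x j) \<longleftrightarrow>
      (\<forall>j\<in>obj J. l j \<cdot> uncurry A L c = uncurry A (Do j) (x j))"
    if c: "c \<in> hom V X (ihom V A L)" for c
    using uncurry_ihom_r_comp[OF c l A] uncurry_inj[OF comp_hom[OF c ihom_r_hom[OF l A]] x A D]
    by metis
  obtain w where w: "w \<in> hom V (tens V X A) L" "\<forall>j\<in>obj J. l j \<cdot> w = uncurry A (Do j) (x j)"
    and w_unique:
      "\<And>w'. w' \<in> hom V (tens V X A) L \<and> (\<forall>j\<in>obj J. l j \<cdot> w' = uncurry A (Do j) (x j)) \<Longrightarrow> w' = w"
    using lift[rule_format, OF is_cone_uncurry[OF J F A xc]] by (elim ex1E) blast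
  show "\<exists>!c. c \<in> hom V X (ihom V A L) \<and> (\<forall>j\<in>obj J. ihom_r V A (l j) \<cdot> c = x j)"
  proof (rule ex1I[of _ "curry X A L w"])
    show "curry X A L w \<in> hom V X (ihom V A L) \<and> (\<forall>j\<in>obj J. ihom_r V A (l j) \<cdot> curry X A L w = x j)"
      using factors_iff[OF curry_hom[OF w(1) X A]] w uncurry_curry[OF w(1) X A]
        curry_hom[OF w(1) X A]
      by simp
    fix c assume "c \<in> hom V X (ihom V A L) \<and> (\<forall>j\<in>obj J. ihom_r V A (l j) \<cdot> c = x j)"
    then show "c = curry X A L w"
      using factors_iff w_unique[of "uncurry A L c"] uncurry_hom[OF _ A L] curry_uncurry[OF _ A L]
        by metis
  qed
qed

lemma wide_pullback_ihom_r:
  assumes W: "wide_pullback V I f B P q p" and A: "A \<in> obj V"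
  shows "wide_pullback V I (\<lambda>i. ihom_r V A (f i)) (ihom V A B) (ihom V A P)
           (ihom_r V A q) (\<lambda>i. ihom_r V A (p i))"
proof -
  have B: "B \<in> obj V" and P: "P \<in> obj V" and q: "q \<in> hom V P B"
    and f: "\<And>i. i \<in> I \<Longrightarrow> f i \<in> hom V (cdom V (f i)) B"
    using W wide_pullback_apex unfolding wide_pullback_def by blast+
  have p: "\<And>i. i \<in> I \<Longrightarrow> p i \<in> hom V P (cdom V (f i))" and fp: "\<And>i. i \<in> I \<Longrightarrow> f i \<cdot> p i = q"
    using wide_pullback_leg[OF W] by blast+
  have C: "\<And>i. i \<in> I \<Longrightarrow> cdom V (f i) \<in> obj V" using f hom_obj_dom by blast
  have dom_r: "\<And>i. i \<in> I \<Longrightarrow> cdom V (ihom_r V A (f i)) = ihom V A (cdom V (f i))"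
    using ihom_r_hom[OF f A] hom_dom by blast
  show ?thesis
    unfolding wide_pullback_def
  proof (intro conjI ballI allI impI)
    show "ihom V A B \<in> obj V" "ihom V A P \<in> obj V" "ihom_r V A q \<in> hom V (ihom V A P) (ihom V A B)"
      using A B P q by blast+
    fix i assume i: "i \<in> I"
    show "ihom_r V A (f i) \<in> hom V (cdom V (ihom_r V A (f i))) (ihom V A B)"
      using ihom_r_hom[OF f[OF i] A] dom_r[OF i] by simp
    show "ihom_r V A (p i) \<in> hom V (ihom V A P) (cdom V (ihom_r V A (f i)))"
      using ihom_r_hom[OF p[OF i] A] dom_r[OF i] by simp
    show "ihom_r V A (f i) \<cdot> ihom_r V A (p i) = ihom_r V A q"
      using ihom_r_comp[OF p[OF i] f[OF i] A] fp[OF i] by simp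
  next
    fix X y x assume y: "y \<in> hom V X (ihom V A B)"
      and x0: "\<forall>i\<in>I. x i \<in> hom V X (cdom V (ihom_r V A (f i))) \<and> ihom_r V A (f i) \<cdot> x i = y"
    have X: "X \<in> obj V" using hom_obj_dom[OF y] .
    have x: "\<And>i. i \<in> I \<Longrightarrow> x i \<in> hom V X (ihom V A (cdom V (f i)))"
      and fx: "\<And>i. i \<in> I \<Longrightarrow> ihom_r V A (f i) \<cdot> x i = y"
      using x0 dom_r by auto
    define z where "z i = uncurry A (cdom V (f i)) (x i)" for i
    have z: "z i \<in> hom V (tens V X A) (cdom V (f i)) \<and> f i \<cdot> z i = uncurry A B y" if i: "i \<in> I"
      for i
      unfolding z_def
        using uncurry_hom[OF x[OF i] A C[OF i]] uncurry_ihom_r_comp[OF x[OF i] f[OF i] A] fx[OF i]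
      by simp
    have factors_iff: "(ihom_r V A q \<cdot> c = y \<and> (\<forall>i\<in>I. ihom_r V A (p i) \<cdot> c = x i)) \<longleftrightarrow>
        (q \<cdot> uncurry A P c = uncurry A B y \<and> (\<forall>i\<in>I. p i \<cdot> uncurry A P c = z i))"
      if c: "c \<in> hom V X (ihom V A P)" for c
    proof -
      have "ihom_r V A q \<cdot> c = y \<longleftrightarrow> q \<cdot> uncurry A P c = uncurry A B y"
        using uncurry_ihom_r_comp[OF c q A] uncurry_inj[OF comp_hom[OF c ihom_r_hom[OF q A]] y A B]
        by metis
      moreover have "ihom_r V A (p i) \<cdot> c = x i \<longleftrightarrow> p i \<cdot> uncurry A P c = z i" if i: "i \<in> I" for i
        unfolding z_def
        using uncurry_ihom_r_comp[OF c p[OF i] A]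
          uncurry_inj[OF comp_hom[OF c ihom_r_hom[OF p[OF i] A]] x[OF i] A C[OF i]]
        by metis
      ultimately show ?thesis by blast
    qed
    have "\<exists>!w. w \<in> hom V (tens V X A) P \<and> q \<cdot> w = uncurry A B y \<and> (\<forall>i\<in>I. p i \<cdot> w = z i)"
      by (rule wide_pullback_lift[OF W uncurry_hom[OF y A B]]) (rule z)
    then obtain w where w: "w \<in> hom V (tens V X A) P" "q \<cdot> w = uncurry A B y" "\<forall>i\<in>I. p i \<cdot> w = z i"
      and w_unique:
        "\<And>w'. w' \<in> hom V (tens V X A) P \<and> q \<cdot> w' = uncurry A B y \<and> (\<forall>i\<in>I. p i \<cdot> w' = z i)
                       \<Longrightarrow> w' = w"
      by (elim ex1E) blast
    show "\<exists>!c. c \<in> hom V X (ihom V A P) \<and> ihom_r V A q \<cdot> c = y \<and> (\<forall>i\<in>I. ihom_r V A (p i) \<cdot> c = x i)"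
    proof (rule ex1I[of _ "curry X A P w"])
      show "curry X A P w \<in> hom V X (ihom V A P) \<and> ihom_r V A q \<cdot> curry X A P w = y \<and>
          (\<forall>i\<in>I. ihom_r V A (p i) \<cdot> curry X A P w = x i)"
        using factors_iff[OF curry_hom[OF w(1) X A]] w uncurry_curry[OF w(1) X A]
          curry_hom[OF w(1) X A]
        by simp
      fix c assume
        "c \<in> hom V X (ihom V A P) \<and> ihom_r V A q \<cdot> c = y \<and> (\<forall>i\<in>I. ihom_r V A (p i) \<cdot> c = x i)"
      then show "c = curry X A P w"
        using factors_iff w_unique[of "uncurry A P c"] uncurry_hom[OF _ A P]
          curry_uncurry[OF _ A P] by metis
    qed
  qed
qed

lemma has_finite_Vlimits:
  assumes "has_finite_limits V"
  shows "has_finite_Vlimits V"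
  unfolding has_finite_Vlimits_def
proof (intro allI impI)
  fix J :: "(nat,nat) cat" and Do Da assume JF: "finite_shape J \<and> is_functor J V Do Da"
  then obtain L l where lim: "is_limit J V Do Da L l" using assms unfolding has_finite_limits_def
    by blast
  have "category J" using JF unfolding finite_shape_def by blast
  then have "is_Vlimit J V Do Da L l" unfolding is_Vlimit_def using lim is_limit_ihom_r JF by blast
  then show "\<exists>L l. is_Vlimit J V Do Da L l" by blast
qed

lemma Vfinitely_well_complete:
  assumes fwc: "finitely_well_complete V"
  shows "Vfinitely_well_complete V"
  unfolding Vfinitely_well_complete_def
proof (intro conjI allI impI)
  show "has_finite_Vlimits V"
    using fwc has_finite_Vlimits unfolding finitely_well_complete_def by blast
  fix S B assume "B \<in> obj V \<and> S \<subseteq> VStrMonos V \<and> (\<forall>s\<in>S. ccod V s = B)"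
  then have "B \<in> obj V" "S \<subseteq> StrMonos V" "\<forall>s\<in>S. ccod V s = B"
    using VStrMonos_eq_StrMonos[OF fwc] by auto
  then obtain P q p where W: "wide_pullback V S (\<lambda>s. s) B P q p" and q: "q \<in> StrMonos V"
    using finitely_well_complete_wide_pullback[OF fwc] by blast
  have "is_Vwide_pullback V S (\<lambda>s. s) B P q p"
    unfolding is_Vwide_pullback_def using W wide_pullback_ihom_r[OF W] by blast
  with q show "\<exists>P q p. is_Vwide_pullback V S (\<lambda>s. s) B P q p \<and> q \<in> VStrMonos V"
    using VStrMonos_eq_StrMonos[OF fwc] by blast
qed

lemma V_factorization_system_Epis_StrMonos:
  "finitely_well_complete V \<Longrightarrow> V_factorization_system V (Epis V) (StrMonos V)"
  unfolding V_factorization_system_def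
  using Vright_Epis Vleft_StrMonos Epis_StrMonos_factorization by blast

lemma V_proper_Epis_StrMonos: "V_proper V (Epis V) (StrMonos V)"
  unfolding V_proper_def VEpis_eq_Epis using StrMonos_subset_VMonos by blast

end

theorem proposition7p10:
  fixes V :: "('o,'m) smcc"
  assumes "symmetric_monoidal_closed V"
    and "finitely_well_complete V"
  shows "Vfinitely_well_complete V \<and>
         VEpis V = Epis V \<and> VStrMonos V = StrMonos V \<and>
         V_factorization_system V (Epis V) (StrMonos V) \<and>
         V_proper V (Epis V) (StrMonos V)"
proof -
  interpret smc V
    using assms(1) by unfold_locales (simp_all add: symmetric_monoidal_closed_def)
  show ?thesis
    using Vfinitely_well_complete[OF assms(2)] VEpis_eq_Epis VStrMonos_eq_StrMonos[OF assms(2)]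
      V_factorization_system_Epis_StrMonos[OF assms(2)] V_proper_Epis_StrMonos
    by blast
qed

end
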